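(* In the setting of the context, assume $\gamma(n)\to\gamma>1$, $\delta>1$, and $F(K)=1$ for some $K<\infty$. Then there exist constants $0<C_3,C_4<\infty$ such that for $0\le\varepsilon<\frac13$, all $k\ge\frac{1+2\varepsilon}{2\log\delta}\log n$ and all sufficiently large $n$, $$\Pr\{\rho(n,k)\le(2k+1)K\mid |T'_k|\ne0,|T''_k|\ne0\}=\Pr\{\exists\text{ a conducting path between }\langle0\rangle'\text{ and }\langle0\rangle''\text{ in }N(n,k)\mid|T'_k|\ne0,|T''_k|\ne0\}\ge1-C_3n^{-C_4\varepsilon}.$$
   Context: $F$ is a distribution function on $[0,\infty)$ and $0\le\gamma(n)\le n$. Let $T',T''$ be independent, disjoint family trees of Bienaym\'e–Galton–Watson processes with $Z_0=1$ and Poisson offspring of mean $\delta$, with roots $\langle0\rangle',\langle0\rangle''$, generations $T'_k,T''_k$ and truncations $T'_{[k]},T''_{[k]}$ (generations $0,\dots,k$); every edge of $T'\cup T''$ gets an independent resistance with distribution $F$. The network $N(n,k)$ consists of $T'_{[k]}$, $T''_{[k]}$ and, for each pair $v'\in T'_k$, $v''\in T''_k$, an edge between them whose resistance has law $\Pr(\le x)=\frac{\gamma(n)}nF(x)$ ($0\le x<\infty$), $\Pr(=\infty)=1-\frac{\gamma(n)}n$, all independent of each other and of everything else. An edge or path is conducting if its resistance(s) are finite. $\rho(n,k)$ is the effective resistance between $\langle0\rangle'$ and $\langle0\rangle''$ in $N(n,k)$. *)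

theory Defs
  imports "HOL-Probability.Probability"
begin

text \<open>The effective resistance is the minimal energy of a unit flow (infinite if none exists).\<close>

definition unit_flow ::
  "'v set \<Rightarrow> 'e set \<Rightarrow> ('e \<Rightarrow> 'v \<times> 'v) \<Rightarrow> ('e \<Rightarrow> ereal) \<Rightarrow> 'v \<Rightarrow> 'v \<Rightarrow> ('e \<Rightarrow> real) \<Rightarrow> bool" where
  "unit_flow V Ed ends r a b \<theta> \<longleftrightarrow>
     (\<forall>e\<in>Ed. r e = \<infinity> \<longrightarrow> \<theta> e = 0) \<and>
     (\<forall>x\<in>V. (\<Sum>e\<in>{e\<in>Ed. fst (ends e) = x}. \<theta> e) - (\<Sum>e\<in>{e\<in>Ed. snd (ends e) = x}. \<theta> e)
             = (if x = a then 1 else if x = b then -1 else 0))"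

definition flow_energy :: "'e set \<Rightarrow> ('e \<Rightarrow> ereal) \<Rightarrow> ('e \<Rightarrow> real) \<Rightarrow> real" where
  "flow_energy Ed r \<theta> = (\<Sum>e\<in>{e\<in>Ed. r e \<noteq> \<infinity>}. real_of_ereal (r e) * (\<theta> e)\<^sup>2)"

definition eff_resistance ::
  "'v set \<Rightarrow> 'e set \<Rightarrow> ('e \<Rightarrow> 'v \<times> 'v) \<Rightarrow> ('e \<Rightarrow> ereal) \<Rightarrow> 'v \<Rightarrow> 'v \<Rightarrow> ereal" where
  "eff_resistance V Ed ends r a b =
     Inf {ereal (flow_energy Ed r \<theta>) | \<theta>. unit_flow V Ed ends r a b \<theta>}"

definition conducting_adj :: "'e set \<Rightarrow> ('e \<Rightarrow> 'v \<times> 'v) \<Rightarrow> ('e \<Rightarrow> ereal) \<Rightarrow> 'v \<Rightarrow> 'v \<Rightarrow> bool" where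
  "conducting_adj Ed ends r x y \<longleftrightarrow>
     (\<exists>e\<in>Ed. r e \<noteq> \<infinity> \<and> (ends e = (x, y) \<or> ends e = (y, x)))"

definition conducting_path :: "'e set \<Rightarrow> ('e \<Rightarrow> 'v \<times> 'v) \<Rightarrow> ('e \<Rightarrow> ereal) \<Rightarrow> 'v \<Rightarrow> 'v \<Rightarrow> bool" where
  "conducting_path Ed ends r a b \<longleftrightarrow> (conducting_adj Ed ends r)\<^sup>*\<^sup>* a b"

text \<open>Independent random coordinates (Ulam--Harris labelling of the trees by nat lists):
  Off1 v / Off2 v: number of children of vertex v in T' / T'' (Poisson(delta));
  Res1 v / Res2 v: resistance of the edge from the parent of v to v in T' / T'' (law F);
  CrossB v' v'', CrossR v' v'': the cross edge between v' and v'' has resistance CrossR v' v''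
  (law F) if CrossB v' v'' = 1 (probability gamma(n)/n) and infinite resistance otherwise;
  this gives exactly the law Pr(<= x) = gamma(n)/n F(x), Pr(= infinity) = 1 - gamma(n)/n.\<close>

datatype idx = Off1 "nat list" | Off2 "nat list" | Res1 "nat list" | Res2 "nat list"
  | CrossB "nat list" "nat list" | CrossR "nat list" "nat list"

datatype nedge = E1 "nat list" | E2 "nat list" | EC "nat list" "nat list"

definition coord_dist :: "real measure \<Rightarrow> real \<Rightarrow> real \<Rightarrow> idx \<Rightarrow> real measure" where
  "coord_dist \<mu> \<delta> p i = (case i of
       Off1 _ \<Rightarrow> measure_pmf (map_pmf real (poisson_pmf \<delta>))
     | Off2 _ \<Rightarrow> measure_pmf (map_pmf real (poisson_pmf \<delta>))
     | Res1 _ \<Rightarrow> \<mu>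
     | Res2 _ \<Rightarrow> \<mu>
     | CrossB _ _ \<Rightarrow> measure_pmf (map_pmf (\<lambda>b. if b then 1 else 0) (bernoulli_pmf p))
     | CrossR _ _ \<Rightarrow> \<mu>)"

definition netP :: "real measure \<Rightarrow> real \<Rightarrow> (nat \<Rightarrow> real) \<Rightarrow> nat \<Rightarrow> (idx \<Rightarrow> real) measure" where
  "netP \<mu> \<delta> \<gamma> n = PiM UNIV (coord_dist \<mu> \<delta> (\<gamma> n / real n))"

definition in_tree :: "(nat list \<Rightarrow> nat) \<Rightarrow> nat list \<Rightarrow> bool" where
  "in_tree off v \<longleftrightarrow> (\<forall>j<length v. v ! j < off (take j v))"

definition off1 :: "(idx \<Rightarrow> real) \<Rightarrow> nat list \<Rightarrow> nat" where
  "off1 \<omega> v = nat \<lfloor>\<omega> (Off1 v)\<rfloor>"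
definition off2 :: "(idx \<Rightarrow> real) \<Rightarrow> nat list \<Rightarrow> nat" where
  "off2 \<omega> v = nat \<lfloor>\<omega> (Off2 v)\<rfloor>"

definition gen1 :: "(idx \<Rightarrow> real) \<Rightarrow> nat \<Rightarrow> nat list set" where
  "gen1 \<omega> k = {v. in_tree (off1 \<omega>) v \<and> length v = k}"
definition gen2 :: "(idx \<Rightarrow> real) \<Rightarrow> nat \<Rightarrow> nat list set" where
  "gen2 \<omega> k = {v. in_tree (off2 \<omega>) v \<and> length v = k}"
definition trunc1 :: "(idx \<Rightarrow> real) \<Rightarrow> nat \<Rightarrow> nat list set" where
  "trunc1 \<omega> k = {v. in_tree (off1 \<omega>) v \<and> length v \<le> k}"
definition trunc2 :: "(idx \<Rightarrow> real) \<Rightarrow> nat \<Rightarrow> nat list set" where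
  "trunc2 \<omega> k = {v. in_tree (off2 \<omega>) v \<and> length v \<le> k}"

definition N_vertices :: "(idx \<Rightarrow> real) \<Rightarrow> nat \<Rightarrow> (nat list + nat list) set" where
  "N_vertices \<omega> k = Inl ` trunc1 \<omega> k \<union> Inr ` trunc2 \<omega> k"

definition N_edges :: "(idx \<Rightarrow> real) \<Rightarrow> nat \<Rightarrow> nedge set" where
  "N_edges \<omega> k = E1 ` {v\<in>trunc1 \<omega> k. v \<noteq> []} \<union> E2 ` {v\<in>trunc2 \<omega> k. v \<noteq> []}
     \<union> (\<lambda>(v', v''). EC v' v'') ` (gen1 \<omega> k \<times> gen2 \<omega> k)"

fun N_ends :: "nedge \<Rightarrow> (nat list + nat list) \<times> (nat list + nat list)" where
  "N_ends (E1 v) = (Inl (butlast v), Inl v)"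
| "N_ends (E2 v) = (Inr (butlast v), Inr v)"
| "N_ends (EC v' v'') = (Inl v', Inr v'')"

fun N_res :: "(idx \<Rightarrow> real) \<Rightarrow> nedge \<Rightarrow> ereal" where
  "N_res \<omega> (E1 v) = ereal (\<omega> (Res1 v))"
| "N_res \<omega> (E2 v) = ereal (\<omega> (Res2 v))"
| "N_res \<omega> (EC v' v'') = (if \<omega> (CrossB v' v'') = 1 then ereal (\<omega> (CrossR v' v'')) else \<infinity>)"

definition rho :: "(idx \<Rightarrow> real) \<Rightarrow> nat \<Rightarrow> ereal" where
  "rho \<omega> k = eff_resistance (N_vertices \<omega> k) (N_edges \<omega> k) N_ends (N_res \<omega>) (Inl []) (Inr [])"

definition roots_connected :: "(idx \<Rightarrow> real) \<Rightarrow> nat \<Rightarrow> bool" where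
  "roots_connected \<omega> k \<longleftrightarrow> conducting_path (N_edges \<omega> k) N_ends (N_res \<omega>) (Inl []) (Inr [])"

definition cond_pr :: "'a measure \<Rightarrow> ('a \<Rightarrow> bool) \<Rightarrow> ('a \<Rightarrow> bool) \<Rightarrow> real" where
  "cond_pr M A B = measure M {x\<in>space M. A x \<and> B x} / measure M {x\<in>space M. B x}"

end

theory Submission
  imports Defs
begin

text \<open>Let \<open>f(t) = exp (\<delta> (t - 1))\<close> be the offspring generating function, so that the size
  \<open>Z\<^sub>k\<close> of generation \<open>k\<close> has \<open>E t^Z\<^sub>k = f^k(t)\<close>. Both trees survive to generation \<open>k\<close> with
  probability \<open>(1 - f^k(0))\<^sup>2 \<ge> (1 - 1/\<delta>)\<^sup>2\<close>. If they survive but the roots are not joined, then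
  either one \<open>k\<close>-th generation has between \<open>1\<close> and \<open>x\<close> members, which has probability at most
  \<open>e (f^k(exp (-1/x)) - f^k(0))\<close>, or both have more than \<open>x\<close> members and none of the more than
  \<open>x\<^sup>2\<close> cross edges between them is present, which has probability at most \<open>exp (-p x\<^sup>2)\<close> with
  \<open>p = \<gamma>(n)/n\<close>.

  The iterates of \<open>f\<close> starting from \<open>exp (-1/x)\<close> fall below \<open>1/\<delta>\<close> after about \<open>log\<^sub>\<delta> x\<close> steps,
  and on \<open>[0, 1/\<delta>]\<close> the convex map \<open>f\<close> contracts by the factor \<open>\<delta> exp (1 - \<delta>) < 1\<close>; hence
  \<open>f^k(exp (-1/x)) - f^k(0) = O((x / \<delta>^k)^a)\<close> for some \<open>a > 0\<close>. With \<open>x = n^((1 + \<epsilon>)/2)\<close>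
  and \<open>\<delta>^k \<ge> n^((1 + 2\<epsilon>)/2)\<close> both error terms are \<open>O(n^(-c \<epsilon>))\<close>.

  Finally, all resistances are at most \<open>K\<close> almost surely, so a single present cross edge yields
  a path of \<open>2k + 1\<close> edges and \<open>\<rho>(n,k) \<le> (2k + 1) K\<close>; conversely a finite \<open>\<rho>(n,k)\<close> requires a
  unit current between the roots and hence a conducting path.\<close>

section \<open>Galton--Watson family trees\<close>

definition generation :: "(nat list \<Rightarrow> nat) \<Rightarrow> nat \<Rightarrow> nat list set" where
  "generation off k = {v. in_tree off v \<and> length v = k}"

lemma in_tree_Nil [simp]: "in_tree off []"
  by (simp add: in_tree_def)

lemma in_tree_snoc [simp]: "in_tree off (v @ [i]) \<longleftrightarrow> in_tree off v \<and> i < off v"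
  unfolding in_tree_def by (auto simp: nth_append less_Suc_eq)

lemma in_tree_take: "in_tree off v \<Longrightarrow> in_tree off (take j v)"
  unfolding in_tree_def by (auto simp: min_def)

lemma in_tree_butlast: "in_tree off v \<Longrightarrow> in_tree off (butlast v)"
  by (metis butlast_conv_take in_tree_take)

lemma generation_0 [simp]: "generation off 0 = {[]}"
  by (auto simp: generation_def)

lemma generation_Suc:
  "generation off (Suc k) = (\<lambda>(v, i). v @ [i]) ` Sigma (generation off k) (\<lambda>v. {..<off v})"
proof (intro set_eqI iffI)
  fix w assume "w \<in> generation off (Suc k)"
  then have w: "in_tree off w" "length w = Suc k" by (auto simp: generation_def)
  then obtain v i where "w = v @ [i]" by (metis length_Suc_conv_rev)
  with w show "w \<in> (\<lambda>(v, i). v @ [i]) ` Sigma (generation off k) (\<lambda>v. {..<off v})"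
    by (auto simp: generation_def intro!: image_eqI[of _ _ "(v, i)"])
qed (auto simp: generation_def)

lemma finite_generation [simp]: "finite (generation off k)"
  by (induction k) (auto simp: generation_Suc)

lemma card_generation_Suc: "card (generation off (Suc k)) = (\<Sum>v\<in>generation off k. off v)"
proof -
  have "inj_on (\<lambda>(v, i). v @ [i]) (Sigma (generation off k) (\<lambda>v. {..<off v}))"
    by (auto simp: inj_on_def)
  then show ?thesis
    by (simp add: generation_Suc card_image)
qed

lemma generation_cong:
  assumes "\<And>u. length u < k \<Longrightarrow> off u = off' u"
  shows "generation off k = generation off' k"
  using assms unfolding generation_def in_tree_def by auto

definition offspring :: "(nat list \<Rightarrow> idx) \<Rightarrow> (idx \<Rightarrow> real) \<Rightarrow> nat list \<Rightarrow> nat" where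
  "offspring c \<omega> v = nat \<lfloor>\<omega> (c v)\<rfloor>"

lemma off1_eq_offspring: "off1 \<omega> = offspring Off1 \<omega>"
  and off2_eq_offspring: "off2 \<omega> = offspring Off2 \<omega>"
  by (auto simp: fun_eq_iff off1_def off2_def offspring_def)

lemma gen1_eq_generation: "gen1 \<omega> k = generation (offspring Off1 \<omega>) k"
  and gen2_eq_generation: "gen2 \<omega> k = generation (offspring Off2 \<omega>) k"
  by (auto simp: gen1_def gen2_def generation_def off1_eq_offspring off2_eq_offspring)

section \<open>Iterates of the Poisson generating function\<close>

definition poisson_pgf :: "real \<Rightarrow> real \<Rightarrow> real" where
  "poisson_pgf \<delta> t = exp (\<delta> * (t - 1))"

lemma nn_integral_poisson_power:
  assumes "0 < \<delta>" and "0 \<le> t"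
  shows "(\<integral>\<^sup>+j. ennreal (t ^ j) \<partial>measure_pmf (poisson_pmf \<delta>)) = ennreal (poisson_pgf \<delta> t)"
proof -
  have "(\<lambda>j. (\<delta> * t) ^ j / fact j * exp (-\<delta>)) sums (exp (\<delta> * t) * exp (-\<delta>))"
    using sums_mult2[OF exp_converges[of "\<delta> * t"], of "exp (-\<delta>)"]
    by (simp add: divide_inverse scaleR_conv_of_real mult.commute)
  then have sums: "(\<lambda>j. ennreal ((\<delta> * t) ^ j / fact j * exp (-\<delta>))) sums ennreal (poisson_pgf \<delta> t)"
    using assms by (subst sums_ennreal) (auto simp: poisson_pgf_def algebra_simps simp flip: exp_add)
  have "(\<integral>\<^sup>+j. ennreal (t ^ j) \<partial>measure_pmf (poisson_pmf \<delta>))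
      = (\<Sum>j. ennreal (pmf (poisson_pmf \<delta>) j) * ennreal (t ^ j))"
    by (simp add: nn_integral_measure_pmf nn_integral_count_space_nat)
  also have "\<dots> = (\<Sum>j. ennreal ((\<delta> * t) ^ j / fact j * exp (-\<delta>)))"
    using assms by (intro suminf_cong) (simp add: power_mult_distrib flip: ennreal_mult'')
  also have "\<dots> = ennreal (poisson_pgf \<delta> t)"
    using sums by (rule sums_unique[symmetric])
  finally show ?thesis .
qed

lemma poisson_pgf_pos [simp]: "0 < poisson_pgf \<delta> t"
  by (simp add: poisson_pgf_def)

lemma poisson_pgf_nonneg [simp]: "0 \<le> poisson_pgf \<delta> t"
  by (simp add: poisson_pgf_def)

lemma poisson_pgf_one [simp]: "poisson_pgf \<delta> 1 = 1"
  by (simp add: poisson_pgf_def)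

lemma poisson_pgf_mono: "0 \<le> \<delta> \<Longrightarrow> u \<le> v \<Longrightarrow> poisson_pgf \<delta> u \<le> poisson_pgf \<delta> v"
  by (simp add: poisson_pgf_def mult_left_mono)

lemma poisson_pgf_less_one: "0 < \<delta> \<Longrightarrow> t < 1 \<Longrightarrow> poisson_pgf \<delta> t < 1"
  by (simp add: poisson_pgf_def mult_pos_neg)

lemma poisson_pgf_convex:
  assumes "0 \<le> a" and "a \<le> 1"
  shows "poisson_pgf \<delta> ((1 - a) * u + a * v) \<le> (1 - a) * poisson_pgf \<delta> u + a * poisson_pgf \<delta> v"
proof -
  have "exp ((1 - a) *\<^sub>R (\<delta> * (u - 1)) + a *\<^sub>R (\<delta> * (v - 1)))
      \<le> (1 - a) * exp (\<delta> * (u - 1)) + a * exp (\<delta> * (v - 1))"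
    by (rule convex_onD[OF exp_convex assms]) auto
  moreover have "(1 - a) *\<^sub>R (\<delta> * (u - 1)) + a *\<^sub>R (\<delta> * (v - 1)) = \<delta> * (((1 - a) * u + a * v) - 1)"
    by (simp add: algebra_simps)
  ultimately show ?thesis
    by (simp add: poisson_pgf_def)
qed

lemma funpow_poisson_pgf_nonneg: "0 \<le> u \<Longrightarrow> 0 \<le> (poisson_pgf \<delta> ^^ m) u"
  by (induction m) auto

lemma funpow_poisson_pgf_mono: "0 \<le> \<delta> \<Longrightarrow> u \<le> v \<Longrightarrow> (poisson_pgf \<delta> ^^ m) u \<le> (poisson_pgf \<delta> ^^ m) v"
  by (induction m) (auto intro: poisson_pgf_mono)

lemma funpow_poisson_pgf_less_one: "0 < \<delta> \<Longrightarrow> t < 1 \<Longrightarrow> (poisson_pgf \<delta> ^^ m) t < 1"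
  by (induction m) (auto intro: poisson_pgf_less_one)

lemma one_div_one_minus_exp_le: "0 < (y::real) \<Longrightarrow> 1 / (1 - exp (- y)) \<le> 1 / y + 1"
proof -
  assume y: "0 < y"
  have "(1 + y) * exp (- y) \<le> exp y * exp (- y)"
    by (intro mult_right_mono exp_ge_add_one_self) auto
  then have "y \<le> (1 + y) * (1 - exp (- y))"
    by (simp add: algebra_simps flip: exp_add)
  then show ?thesis
    using y by (simp add: field_simps)
qed

lemma ex_power_between:
  fixes b y :: real
  assumes "1 < b" and "1 \<le> y"
  shows "\<exists>j. y \<le> b ^ j \<and> b ^ j < y * b"
proof -
  obtain n where "y < b ^ n" using real_arch_pow assms(1) by blast
  define j where "j = (LEAST j. y \<le> b ^ j)"
  have yj: "y \<le> b ^ j"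
    unfolding j_def by (rule LeastI[of _ n]) (use \<open>y < b ^ n\<close> in simp)
  have "b ^ j < y * b"
  proof (cases j)
    case 0
    with yj assms show ?thesis by simp
  next
    case (Suc i)
    then have "b ^ i < y"
      using not_less_Least[of i "\<lambda>j. y \<le> b ^ j"] by (simp add: j_def)
    with Suc assms show ?thesis by (simp add: mult.commute)
  qed
  with yj show ?thesis by blast
qed

lemma affine_combination_eq:
  fixes u v s :: real
  assumes "u \<noteq> v"
  shows "(1 - (s - u) / (v - u)) * u + ((s - u) / (v - u)) * v = s"
proof -
  have affine: "(1 - a) * u + a * v = u + a * (v - u)" for a :: real
    by (simp add: algebra_simps)
  have "(1 - (s - u) / (v - u)) * u + ((s - u) / (v - u)) * v = u + ((s - u) / (v - u)) * (v - u)"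
    by (rule affine)
  also have "\<dots> = s"
    using assms by simp
  finally show ?thesis .
qed

context
  fixes \<delta> :: real
  assumes supercritical: "1 < \<delta>"
begin

text \<open>The derivative of the generating function \<open>f = poisson_pgf \<delta>\<close> at \<open>1/\<delta>\<close> is
  \<open>\<delta> f(1/\<delta>) = \<delta> e\<^sup>1\<^sup>-\<^sup>\<delta>\<close>; by convexity it is the Lipschitz constant of \<open>f\<close> on \<open>[0, 1/\<delta>]\<close>.\<close>

definition contraction_rate :: real where
  "contraction_rate = \<delta> * exp (1 - \<delta>)"

lemma contraction_rate_pos: "0 < contraction_rate"
  using supercritical by (simp add: contraction_rate_def)

lemma contraction_rate_less_one: "contraction_rate < 1"
proof -
  have "1 + (\<delta> - 1) / 2 \<le> exp ((\<delta> - 1) / 2)"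
    using exp_ge_add_one_self by (simp add: add.commute)
  then have "(1 + (\<delta> - 1) / 2)\<^sup>2 \<le> exp ((\<delta> - 1) / 2) ^ 2"
    using supercritical by (intro power_mono) auto
  moreover have "\<delta> < (1 + (\<delta> - 1) / 2)\<^sup>2"
  proof -
    have "0 < ((\<delta> - 1) / 2)\<^sup>2"
      using supercritical by simp
    then show ?thesis
      by (simp add: power2_eq_square algebra_simps)
  qed
  moreover have "exp ((\<delta> - 1) / 2) ^ 2 = exp (\<delta> - 1)"
    by (simp add: power2_eq_square flip: exp_add)
  ultimately have "\<delta> * exp (1 - \<delta>) < exp (\<delta> - 1) * exp (1 - \<delta>)"
    by simp
  then show ?thesis
    by (simp add: contraction_rate_def flip: exp_add)
qed

lemma poisson_pgf_inverse: "poisson_pgf \<delta> (1/\<delta>) = contraction_rate / \<delta>"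
  using supercritical by (simp add: poisson_pgf_def contraction_rate_def algebra_simps)

lemma poisson_pgf_inverse_less: "poisson_pgf \<delta> (1/\<delta>) < 1/\<delta>"
  using contraction_rate_less_one supercritical by (simp add: poisson_pgf_inverse divide_strict_right_mono)

lemma funpow_poisson_pgf_le_inverse:
  "0 \<le> u \<Longrightarrow> u \<le> 1/\<delta> \<Longrightarrow> (poisson_pgf \<delta> ^^ m) u \<le> 1/\<delta>"
proof (induction m)
  case (Suc m)
  then have "poisson_pgf \<delta> ((poisson_pgf \<delta> ^^ m) u) \<le> poisson_pgf \<delta> (1/\<delta>)"
    using supercritical by (intro poisson_pgf_mono) auto
  with poisson_pgf_inverse_less show ?case by simp
qed simp

lemma poisson_pgf_lipschitz:
  assumes "0 \<le> u" and "u \<le> v" and "v \<le> 1/\<delta>"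
  shows "poisson_pgf \<delta> v - poisson_pgf \<delta> u \<le> contraction_rate * (v - u)"
proof -
  have "poisson_pgf \<delta> v - poisson_pgf \<delta> u = poisson_pgf \<delta> v * (1 - exp (- (\<delta> * (v - u))))"
    by (simp add: poisson_pgf_def algebra_simps flip: exp_add)
  also have "\<dots> \<le> poisson_pgf \<delta> v * (\<delta> * (v - u))"
    using exp_ge_add_one_self[of "- (\<delta> * (v - u))"] by (intro mult_left_mono) auto
  also have "\<dots> \<le> poisson_pgf \<delta> (1/\<delta>) * (\<delta> * (v - u))"
    using assms supercritical by (intro mult_right_mono poisson_pgf_mono) auto
  also have "\<dots> = contraction_rate * (v - u)"
    using supercritical by (simp add: poisson_pgf_inverse)
  finally show ?thesis .
qed

lemma funpow_poisson_pgf_lipschitz: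
  assumes "0 \<le> u" and "u \<le> v" and "v \<le> 1/\<delta>"
  shows "(poisson_pgf \<delta> ^^ m) v - (poisson_pgf \<delta> ^^ m) u \<le> contraction_rate ^ m * (v - u)"
proof (induction m)
  case (Suc m)
  let ?u = "(poisson_pgf \<delta> ^^ m) u" and ?v = "(poisson_pgf \<delta> ^^ m) v"
  have "poisson_pgf \<delta> ?v - poisson_pgf \<delta> ?u \<le> contraction_rate * (?v - ?u)"
    using assms supercritical
    by (intro poisson_pgf_lipschitz funpow_poisson_pgf_nonneg funpow_poisson_pgf_mono
        funpow_poisson_pgf_le_inverse) auto
  also have "\<dots> \<le> contraction_rate * (contraction_rate ^ m * (v - u))"
    using Suc contraction_rate_pos by (intro mult_left_mono) auto
  finally show ?case by (simp add: mult_ac)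
qed simp

lemma one_div_one_minus_funpow_poisson_pgf:
  assumes "0 \<le> t" and "t < 1"
  shows "1 / (1 - (poisson_pgf \<delta> ^^ j) t) \<le> 1 / (\<delta> ^ j * (1 - t)) + \<delta> / (\<delta> - 1)"
proof (induction j)
  case 0
  then show ?case using supercritical by simp
next
  case (Suc j)
  let ?u = "(poisson_pgf \<delta> ^^ j) t"
  have u: "0 \<le> ?u" "?u < 1"
    using assms supercritical funpow_poisson_pgf_nonneg funpow_poisson_pgf_less_one by auto
  have "1 / (1 - poisson_pgf \<delta> ?u) \<le> 1 / (\<delta> * (1 - ?u)) + 1"
    using one_div_one_minus_exp_le[of "\<delta> * (1 - ?u)"] u supercritical
    by (simp add: poisson_pgf_def algebra_simps)
  also have "1 / (\<delta> * (1 - ?u)) = (1 / (1 - ?u)) / \<delta>"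
    by simp
  also have "\<dots> \<le> (1 / (\<delta> ^ j * (1 - t)) + \<delta> / (\<delta> - 1)) / \<delta>"
    using Suc supercritical by (intro divide_right_mono) auto
  also have "\<dots> + 1 = 1 / (\<delta> ^ Suc j * (1 - t)) + (\<delta> / (\<delta> - 1) / \<delta> + 1)"
    by (simp add: add_divide_distrib)
  also have "\<delta> / (\<delta> - 1) / \<delta> + 1 = \<delta> / (\<delta> - 1)"
    using supercritical by (simp add: field_simps)
  finally show ?case
    by simp
qed

lemma funpow_poisson_pgf_le_midpoint:
  assumes "0 \<le> t" and "t < 1" and "1 / (1 - t) \<le> \<delta> ^ j"
  shows "(poisson_pgf \<delta> ^^ j) t \<le> \<delta> / (2 * \<delta> - 1)"
proof -
  let ?s = "(poisson_pgf \<delta> ^^ j) t"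
  have "1 / (\<delta> ^ j * (1 - t)) \<le> 1"
    using assms supercritical by (simp add: field_simps)
  with one_div_one_minus_funpow_poisson_pgf[OF assms(1,2), of j]
  have "1 / (1 - ?s) \<le> 1 + \<delta> / (\<delta> - 1)"
    by simp
  moreover have "?s < 1"
    using assms supercritical by (intro funpow_poisson_pgf_less_one) auto
  ultimately have "\<delta> - 1 \<le> (2 * \<delta> - 1) * (1 - ?s)"
    using supercritical by (simp add: field_simps)
  then have "?s * (2 * \<delta> - 1) \<le> \<delta>"
    by (simp add: algebra_simps)
  then show ?thesis
    using supercritical by (simp add: field_simps)
qed

lemma poisson_pgf_less_self:
  assumes "1/\<delta> \<le> s" and "s < 1"
  shows "poisson_pgf \<delta> s < s"
proof -
  let ?a = "(s - 1/\<delta>) / (1 - 1/\<delta>)"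
  have a: "0 \<le> ?a" "?a < 1"
    using assms supercritical by (auto simp: field_simps)
  have s: "s = (1 - ?a) * (1/\<delta>) + ?a * 1"
    using affine_combination_eq[of "1/\<delta>" 1 s] supercritical by simp
  have "poisson_pgf \<delta> s \<le> (1 - ?a) * poisson_pgf \<delta> (1/\<delta>) + ?a * poisson_pgf \<delta> 1"
    using a by (subst s) (intro poisson_pgf_convex, auto)
  also have "\<dots> < (1 - ?a) * (1/\<delta>) + ?a * 1"
  proof -
    have "(1 - ?a) * poisson_pgf \<delta> (1/\<delta>) < (1 - ?a) * (1/\<delta>)"
      using a poisson_pgf_inverse_less by (intro mult_strict_left_mono) auto
    then show ?thesis
      by simp
  qed
  finally show ?thesis
    using s by simp
qed

lemma poisson_pgf_decrement:
  assumes "m < 1"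
  obtains c where "0 < c" and "\<And>s. 1/\<delta> \<le> s \<Longrightarrow> s \<le> m \<Longrightarrow> poisson_pgf \<delta> s \<le> s - c"
proof (cases "1/\<delta> \<le> m")
  case False
  then show ?thesis
    using that[of 1] by simp
next
  case True
  define c where "c = min (1/\<delta> - poisson_pgf \<delta> (1/\<delta>)) (m - poisson_pgf \<delta> m)"
  have "0 < c"
    using poisson_pgf_inverse_less poisson_pgf_less_self[OF True assms]
    by (simp add: c_def)
  moreover have "poisson_pgf \<delta> s \<le> s - c" if s: "1/\<delta> \<le> s" "s \<le> m" for s
  proof (cases "1/\<delta> = m")
    case True
    with s show ?thesis by (simp add: c_def)
  next
    case False
    let ?a = "(s - 1/\<delta>) / (m - 1/\<delta>)"
    have affine_shift: "(1 - b) * (u - c) + b * (v - c) = ((1 - b) * u + b * v) - c" for b u v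
      by (simp add: algebra_simps)
    have a: "0 \<le> ?a" "?a \<le> 1"
      using s False by (auto simp: field_simps)
    have s_eq: "s = (1 - ?a) * (1/\<delta>) + ?a * m"
      using affine_combination_eq[OF False, of s] by simp
    have "poisson_pgf \<delta> s \<le> (1 - ?a) * poisson_pgf \<delta> (1/\<delta>) + ?a * poisson_pgf \<delta> m"
      using a by (subst s_eq) (intro poisson_pgf_convex, auto)
    also have "\<dots> \<le> (1 - ?a) * (1/\<delta> - c) + ?a * (m - c)"
      using a by (intro add_mono mult_left_mono) (auto simp: c_def)
    also have "\<dots> = ((1 - ?a) * (1/\<delta>) + ?a * m) - c"
      by (rule affine_shift)
    also have "\<dots> = s - c"
      using s_eq by simp
    finally show ?thesis .
  qed
  ultimately show ?thesis
    by (rule that)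
qed

lemma funpow_poisson_pgf_reaches_inverse:
  assumes "m < 1"
  obtains i where "\<And>s. 0 \<le> s \<Longrightarrow> s \<le> m \<Longrightarrow> (poisson_pgf \<delta> ^^ i) s \<le> 1/\<delta>"
proof -
  obtain c where c: "0 < c" and dec: "\<And>s. 1/\<delta> \<le> s \<Longrightarrow> s \<le> m \<Longrightarrow> poisson_pgf \<delta> s \<le> s - c"
    using poisson_pgf_decrement[OF assms] by blast
  have bound: "(poisson_pgf \<delta> ^^ i) s \<le> max (1/\<delta>) (m - real i * c)" if "0 \<le> s" "s \<le> m" for i s
  proof (induction i)
    case 0
    with that show ?case by simp
  next
    case (Suc i)
    let ?w = "(poisson_pgf \<delta> ^^ i) s"
    show ?case
    proof (cases "?w \<le> 1/\<delta>")
      case True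
      then have "poisson_pgf \<delta> ?w \<le> poisson_pgf \<delta> (1/\<delta>)"
        using supercritical by (intro poisson_pgf_mono) auto
      with poisson_pgf_inverse_less show ?thesis by simp
    next
      case False
      with Suc have "?w \<le> m - real i * c"
        by simp
      moreover have "0 \<le> real i * c"
        using c by simp
      ultimately have "poisson_pgf \<delta> ?w \<le> ?w - c"
        using False by (intro dec) auto
      with \<open>?w \<le> m - real i * c\<close> show ?thesis
        by (simp add: algebra_simps)
    qed
  qed
  have "m / c \<le> real (nat \<lceil>m / c\<rceil>)"
    by (rule real_nat_ceiling_ge)
  then have "m - real (nat \<lceil>m / c\<rceil>) * c \<le> 0"
    using c by (simp add: field_simps)
  moreover have "0 < 1/\<delta>"
    using supercritical by simp
  ultimately have "max (1/\<delta>) (m - real (nat \<lceil>m / c\<rceil>) * c) = 1/\<delta>"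
    by (intro max_absorb1) linarith
  with bound show ?thesis
    by (intro that[of "nat \<lceil>m / c\<rceil>"]) metis
qed

lemma funpow_poisson_pgf_enters_basin:
  obtains i where "\<And>t j. 0 \<le> t \<Longrightarrow> t < 1 \<Longrightarrow> 1 / (1 - t) \<le> \<delta> ^ j
    \<Longrightarrow> (poisson_pgf \<delta> ^^ (i + j)) t \<le> 1/\<delta>"
proof -
  have "\<delta> / (2 * \<delta> - 1) < 1"
    using supercritical by simp
  then obtain i where i: "\<And>s. 0 \<le> s \<Longrightarrow> s \<le> \<delta> / (2 * \<delta> - 1) \<Longrightarrow> (poisson_pgf \<delta> ^^ i) s \<le> 1/\<delta>"
    using funpow_poisson_pgf_reaches_inverse by blast
  show ?thesis
  proof (rule that)
    fix t j
    assume "0 \<le> t" "t < 1" "1 / (1 - t) \<le> \<delta> ^ j"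
    then show "(poisson_pgf \<delta> ^^ (i + j)) t \<le> 1/\<delta>"
      by (simp add: funpow_add i funpow_poisson_pgf_le_midpoint
          funpow_poisson_pgf_nonneg)
  qed
qed

text \<open>The exponent \<open>a\<close> with \<open>contraction_rate = \<delta> powr -a\<close>, so that the contraction factor
  \<open>contraction_rate\<^sup>m\<close> becomes \<open>(\<delta>\<^sup>-\<^sup>m) powr a\<close>.\<close>

definition decay_exponent :: real where
  "decay_exponent = - ln contraction_rate / ln \<delta>"

lemma decay_exponent_pos: "0 < decay_exponent"
  using supercritical contraction_rate_pos contraction_rate_less_one
  by (simp add: decay_exponent_def divide_neg_pos)

lemma funpow_poisson_pgf_gap_le_basin:
  assumes "0 \<le> t" and "t < 1" and basin: "(poisson_pgf \<delta> ^^ l) t \<le> 1/\<delta>"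
  shows "(poisson_pgf \<delta> ^^ k) t - (poisson_pgf \<delta> ^^ k) 0 \<le> (\<delta> ^ l / \<delta> ^ k) powr decay_exponent"
proof (cases "l \<le> k")
  case True
  define m where "m = k - l"
  have k: "k = m + l"
    using True by (simp add: m_def)
  let ?u = "(poisson_pgf \<delta> ^^ l) 0" and ?v = "(poisson_pgf \<delta> ^^ l) t"
  have uv: "0 \<le> ?u" "?u \<le> ?v"
    using assms supercritical by (auto intro: funpow_poisson_pgf_nonneg funpow_poisson_pgf_mono)
  have "(poisson_pgf \<delta> ^^ k) t - (poisson_pgf \<delta> ^^ k) 0 = (poisson_pgf \<delta> ^^ m) ?v - (poisson_pgf \<delta> ^^ m) ?u"
    by (simp add: k funpow_add)
  also have "\<dots> \<le> contraction_rate ^ m * (?v - ?u)"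
    using uv basin by (rule funpow_poisson_pgf_lipschitz)
  also have "\<dots> \<le> contraction_rate ^ m"
  proof (intro mult_left_le)
    have "1/\<delta> < 1"
      using supercritical by simp
    with uv basin show "?v - ?u \<le> 1"
      by linarith
  qed (use contraction_rate_pos in simp)
  also have "\<dots> = contraction_rate powr real m"
    using contraction_rate_pos by (simp add: powr_realpow)
  also have "\<dots> = \<delta> powr (- real m * decay_exponent)"
    using supercritical contraction_rate_pos
    by (simp add: powr_def decay_exponent_def)
  also have "\<dots> = (\<delta> powr (- real m)) powr decay_exponent"
    by (simp add: powr_powr)
  also have "\<delta> powr (- real m) = \<delta> ^ l / \<delta> ^ k"
    using supercritical by (simp add: k power_add powr_minus_divide powr_realpow)
  finally show ?thesis .
next
  case False
  have "(poisson_pgf \<delta> ^^ k) t - (poisson_pgf \<delta> ^^ k) 0 \<le> 1"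
    using assms supercritical funpow_poisson_pgf_less_one[of \<delta> t k] funpow_poisson_pgf_nonneg[where u = 0 and \<delta> = \<delta> and m = k]
    by simp
  also have "1 \<le> (\<delta> ^ l / \<delta> ^ k) powr decay_exponent"
    using False supercritical decay_exponent_pos by (intro ge_one_powr_ge_zero) auto
  finally show ?thesis .
qed

lemma funpow_poisson_pgf_gap_le:
  obtains C a where "0 < C" and "0 < a"
    and "\<And>k x. 1 \<le> x \<Longrightarrow>
      (poisson_pgf \<delta> ^^ k) (exp (-1/x)) - (poisson_pgf \<delta> ^^ k) 0 \<le> C * (x / \<delta> ^ k) powr a"
proof -
  obtain i where i: "\<And>t j. 0 \<le> t \<Longrightarrow> t < 1 \<Longrightarrow> 1 / (1 - t) \<le> \<delta> ^ j
      \<Longrightarrow> (poisson_pgf \<delta> ^^ (i + j)) t \<le> 1/\<delta>"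
    using funpow_poisson_pgf_enters_basin by blast
  define C where "C = (2 * \<delta> ^ Suc i) powr decay_exponent"
  show ?thesis
  proof (rule that)
    show "0 < C"
      using supercritical by (simp add: C_def)
    fix k and x :: real
    assume x: "1 \<le> x"
    let ?t = "exp (-1/x)"
    obtain j where j: "2 * x \<le> \<delta> ^ j" "\<delta> ^ j < 2 * x * \<delta>"
      using ex_power_between[OF supercritical, of "2 * x"] x by auto
    have "1 / (1 - ?t) \<le> \<delta> ^ j"
      using one_div_one_minus_exp_le[of "1/x"] x j by simp
    then have "(poisson_pgf \<delta> ^^ k) ?t - (poisson_pgf \<delta> ^^ k) 0 \<le> (\<delta> ^ (i + j) / \<delta> ^ k) powr decay_exponent"
      using x by (intro funpow_poisson_pgf_gap_le_basin i) auto
    also have "\<dots> \<le> (2 * \<delta> ^ Suc i * (x / \<delta> ^ k)) powr decay_exponent"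
      using j supercritical decay_exponent_pos
      by (intro powr_mono2) (auto simp: power_add field_simps)
    also have "\<dots> = C * (x / \<delta> ^ k) powr decay_exponent"
      unfolding C_def by (rule powr_mult)
    finally show "(poisson_pgf \<delta> ^^ k) ?t - (poisson_pgf \<delta> ^^ k) 0 \<le> C * (x / \<delta> ^ k) powr decay_exponent" .
  qed (rule decay_exponent_pos)
qed

end

section \<open>Currents in finite networks\<close>

definition divergence :: "'e set \<Rightarrow> ('e \<Rightarrow> 'v \<times> 'v) \<Rightarrow> ('e \<Rightarrow> real) \<Rightarrow> 'v \<Rightarrow> real" where
  "divergence Ed ends \<theta> x = (\<Sum>e\<in>{e\<in>Ed. fst (ends e) = x}. \<theta> e) - (\<Sum>e\<in>{e\<in>Ed. snd (ends e) = x}. \<theta> e)"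

lemma unit_flow_iff_divergence:
  "unit_flow V Ed ends r a b \<theta> \<longleftrightarrow> (\<forall>e\<in>Ed. r e = \<infinity> \<longrightarrow> \<theta> e = 0) \<and>
     (\<forall>x\<in>V. divergence Ed ends \<theta> x = (if x = a then 1 else if x = b then -1 else 0))"
  by (simp add: unit_flow_def divergence_def)

lemma sum_divergence_eq_cut:
  fixes Ed :: "'e set" and ends :: "'e \<Rightarrow> 'v \<times> 'v" and S :: "'v set"
  assumes "finite Ed" and "finite S"
  shows "(\<Sum>x\<in>S. divergence Ed ends \<theta> x)
    = (\<Sum>e\<in>{e\<in>Ed. fst (ends e) \<in> S \<and> snd (ends e) \<notin> S}. \<theta> e)
      - (\<Sum>e\<in>{e\<in>Ed. snd (ends e) \<in> S \<and> fst (ends e) \<notin> S}. \<theta> e)"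
proof -
  have group: "(\<Sum>x\<in>S. \<Sum>e\<in>{e\<in>Ed. f e = x}. \<theta> e)
      = (\<Sum>e\<in>{e\<in>Ed. f e \<in> S \<and> g e \<in> S}. \<theta> e) + (\<Sum>e\<in>{e\<in>Ed. f e \<in> S \<and> g e \<notin> S}. \<theta> e)"
    for f g :: "'e \<Rightarrow> 'v"
  proof -
    have "(\<Sum>x\<in>S. \<Sum>e\<in>{e\<in>Ed. f e = x}. \<theta> e) = (\<Sum>x\<in>S. \<Sum>e\<in>{e\<in>{e\<in>Ed. f e \<in> S}. f e = x}. \<theta> e)"
      by (intro sum.cong) auto
    also have "\<dots> = (\<Sum>e\<in>{e\<in>Ed. f e \<in> S}. \<theta> e)"
      using assms by (intro sum.group) auto
    also have "\<dots> = (\<Sum>e\<in>{e\<in>Ed. f e \<in> S} \<inter> {e. g e \<in> S}. \<theta> e) + (\<Sum>e\<in>{e\<in>Ed. f e \<in> S} - {e. g e \<in> S}. \<theta> e)"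
      using assms by (intro sum.Int_Diff) simp
    finally show ?thesis
      by (simp add: Int_def set_diff_eq conj_commute conj_left_commute)
  qed
  show ?thesis
    using group[of "\<lambda>e. fst (ends e)" "\<lambda>e. snd (ends e)"] group[of "\<lambda>e. snd (ends e)" "\<lambda>e. fst (ends e)"]
    by (simp add: divergence_def sum_subtractf conj_commute)
qed

text \<open>A unit current from \<open>a\<close> has net outflow 1 from the set of vertices conducting-reachable
  from \<open>a\<close>, so some edge leaving that set must conduct.\<close>

lemma unit_flow_imp_conducting_path:
  assumes "finite V" and "finite Ed"
    and ends_in: "\<And>e. e \<in> Ed \<Longrightarrow> fst (ends e) \<in> V \<and> snd (ends e) \<in> V"
    and "a \<in> V" and "a \<noteq> b" and flow: "unit_flow V Ed ends r a b \<theta>"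
  shows "conducting_path Ed ends r a b"
proof (rule ccontr)
  assume no_path: "\<not> conducting_path Ed ends r a b"
  define S where "S = {x\<in>V. (conducting_adj Ed ends r)\<^sup>*\<^sup>* a x}"
  have "a \<in> S" and "b \<notin> S"
    using \<open>a \<in> V\<close> no_path by (auto simp: S_def conducting_path_def)
  have cut_zero: "\<theta> e = 0" if "e \<in> Ed" and "(fst (ends e) \<in> S) \<noteq> (snd (ends e) \<in> S)" for e
  proof (rule ccontr)
    assume "\<theta> e \<noteq> 0"
    with flow \<open>e \<in> Ed\<close> have "r e \<noteq> \<infinity>"
      by (auto simp: unit_flow_def)
    with \<open>e \<in> Ed\<close> have "conducting_adj Ed ends r (fst (ends e)) (snd (ends e))"
      and "conducting_adj Ed ends r (snd (ends e)) (fst (ends e))"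
      by (auto simp: conducting_adj_def prod_eq_iff)
    with that ends_in show False
      by (auto simp: S_def intro: rtranclp.rtrancl_into_rtrancl)
  qed
  have "(\<Sum>x\<in>S. divergence Ed ends \<theta> x) = 0"
    using assms cut_zero by (simp add: sum_divergence_eq_cut S_def)
  moreover have "(\<Sum>x\<in>S. divergence Ed ends \<theta> x) = (\<Sum>x\<in>S. if x = a then 1 else 0)"
    using flow \<open>b \<notin> S\<close> by (intro sum.cong) (auto simp: unit_flow_iff_divergence S_def)
  moreover have "(\<Sum>x\<in>S. if x = a then 1 else 0 :: real) = 1"
    using \<open>finite V\<close> \<open>a \<in> S\<close> by (simp add: S_def)
  ultimately show False
    by simp
qed

definition path_flow :: "('e \<Rightarrow> 'v \<times> 'v) \<Rightarrow> (nat \<Rightarrow> 'e) \<Rightarrow> (nat \<Rightarrow> 'v) \<Rightarrow> nat \<Rightarrow> 'e \<Rightarrow> real" where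
  "path_flow ends pe pv n e =
     (if e \<in> pe ` {..<n} then
        (let i = the_inv_into {..<n} pe e in if ends (pe i) = (pv i, pv (Suc i)) then 1 else -1)
      else 0)"

locale network_path =
  fixes Ed :: "'e set" and ends :: "'e \<Rightarrow> 'v \<times> 'v" and pe :: "nat \<Rightarrow> 'e" and pv :: "nat \<Rightarrow> 'v"
    and n :: nat
  assumes finite_edges: "finite Ed" and inj_pe: "inj_on pe {..<n}" and pe_edges: "pe ` {..<n} \<subseteq> Ed"
    and pe_ends: "\<And>i. i < n \<Longrightarrow> ends (pe i) = (pv i, pv (Suc i)) \<or> ends (pe i) = (pv (Suc i), pv i)"
begin

lemma path_flow_pe:
  "i < n \<Longrightarrow> path_flow ends pe pv n (pe i) = (if ends (pe i) = (pv i, pv (Suc i)) then 1 else -1)"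
  using inj_pe by (simp add: path_flow_def the_inv_into_f_f)

lemma sum_path_flow:
  "(\<Sum>e\<in>{e\<in>Ed. P e}. path_flow ends pe pv n e) = (\<Sum>i<n. if P (pe i) then path_flow ends pe pv n (pe i) else 0)"
proof -
  have "(\<Sum>e\<in>{e\<in>Ed. P e}. path_flow ends pe pv n e) = (\<Sum>e\<in>{e\<in>pe ` {..<n}. P e}. path_flow ends pe pv n e)"
    using finite_edges pe_edges by (intro sum.mono_neutral_right) (auto simp: path_flow_def)
  also have "\<dots> = (\<Sum>e\<in>pe ` {..<n}. if P e then path_flow ends pe pv n e else 0)"
    by (simp add: sum.inter_filter)
  also have "\<dots> = (\<Sum>i<n. if P (pe i) then path_flow ends pe pv n (pe i) else 0)"
    using inj_pe by (simp add: sum.reindex)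
  finally show ?thesis .
qed

lemma divergence_path_flow:
  "divergence Ed ends (path_flow ends pe pv n) x = of_bool (pv 0 = x) - of_bool (pv n = x)"
proof -
  have "divergence Ed ends (path_flow ends pe pv n) x
      = (\<Sum>i<n. of_bool (pv i = x) - of_bool (pv (Suc i) = x))"
    unfolding divergence_def sum_path_flow sum_subtractf[symmetric]
  proof (intro sum.cong refl)
    fix i assume "i \<in> {..<n}"
    then show "(if fst (ends (pe i)) = x then path_flow ends pe pv n (pe i) else 0)
        - (if snd (ends (pe i)) = x then path_flow ends pe pv n (pe i) else 0)
        = of_bool (pv i = x) - of_bool (pv (Suc i) = x)"
      using pe_ends[of i] by (auto simp: path_flow_pe)
  qed
  also have "\<dots> = of_bool (pv 0 = x) - of_bool (pv n = x)"
    by (rule sum_lessThan_telescope')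
  finally show ?thesis .
qed

lemma flow_energy_path_flow_le:
  assumes "\<And>i. i < n \<Longrightarrow> r (pe i) \<noteq> \<infinity> \<and> real_of_ereal (r (pe i)) \<le> K"
  shows "flow_energy Ed r (path_flow ends pe pv n) \<le> real n * K"
proof -
  have "flow_energy Ed r (path_flow ends pe pv n) = (\<Sum>e\<in>pe ` {..<n}. real_of_ereal (r e) * (path_flow ends pe pv n e)\<^sup>2)"
    unfolding flow_energy_def
    using finite_edges pe_edges assms by (intro sum.mono_neutral_right) (auto simp: path_flow_def)
  also have "\<dots> = (\<Sum>i<n. real_of_ereal (r (pe i)))"
  proof -
    have "(path_flow ends pe pv n (pe i))\<^sup>2 = 1" if "i < n" for i
      using that by (simp add: path_flow_pe)
    then show ?thesis
      using inj_pe by (simp add: sum.reindex)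
  qed
  also have "\<dots> \<le> (\<Sum>i<n. K)"
    using assms by (intro sum_mono) auto
  finally show ?thesis
    by simp
qed

lemma eff_resistance_le_path:
  assumes "pv 0 = a" and "pv n = b" and "a \<noteq> b"
    and "\<And>i. i < n \<Longrightarrow> r (pe i) \<noteq> \<infinity> \<and> real_of_ereal (r (pe i)) \<le> K"
  shows "eff_resistance V Ed ends r a b \<le> ereal (real n * K)"
proof -
  have "unit_flow V Ed ends r a b (path_flow ends pe pv n)"
    using assms by (auto simp: unit_flow_iff_divergence divergence_path_flow path_flow_def)
  then have "eff_resistance V Ed ends r a b \<le> ereal (flow_energy Ed r (path_flow ends pe pv n))"
    unfolding eff_resistance_def by (intro Inf_lower) blast
  also have "\<dots> \<le> ereal (real n * K)"
    using flow_energy_path_flow_le[of r K] assms(4) by simp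
  finally show ?thesis .
qed

end

section \<open>The network \<open>N(n,k)\<close>\<close>

lemma finite_trunc1 [simp]: "finite (trunc1 \<omega> k)"
  and finite_trunc2 [simp]: "finite (trunc2 \<omega> k)"
proof -
  have "trunc1 \<omega> k = (\<Union>j\<le>k. gen1 \<omega> j)" "trunc2 \<omega> k = (\<Union>j\<le>k. gen2 \<omega> j)"
    by (auto simp: trunc1_def trunc2_def gen1_def gen2_def)
  then show "finite (trunc1 \<omega> k)" "finite (trunc2 \<omega> k)"
    by (simp_all add: gen1_eq_generation gen2_eq_generation)
qed

lemma finite_gen1 [simp]: "finite (gen1 \<omega> k)"
  and finite_gen2 [simp]: "finite (gen2 \<omega> k)"
  by (simp_all add: gen1_eq_generation gen2_eq_generation)

lemma finite_N_vertices: "finite (N_vertices \<omega> k)"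
  by (simp add: N_vertices_def)

lemma finite_N_edges: "finite (N_edges \<omega> k)"
  by (simp add: N_edges_def)

lemma N_ends_in_N_vertices:
  "e \<in> N_edges \<omega> k \<Longrightarrow> fst (N_ends e) \<in> N_vertices \<omega> k \<and> snd (N_ends e) \<in> N_vertices \<omega> k"
  by (auto simp: N_edges_def N_vertices_def trunc1_def trunc2_def gen1_def gen2_def in_tree_butlast)

lemma root_in_N_vertices: "Inl [] \<in> N_vertices \<omega> k"
  by (auto simp: N_vertices_def trunc1_def)

text \<open>Tree edges join vertices of the same tree, so a conducting path from \<open>T'\<close> to \<open>T''\<close>
  has to use a cross edge.\<close>

lemma roots_connected_imp_cross_edge:
  assumes "roots_connected \<omega> k"
  shows "\<exists>a\<in>gen1 \<omega> k. \<exists>b\<in>gen2 \<omega> k. \<omega> (CrossB a b) = 1"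
proof -
  have "isl y \<or> (\<exists>a\<in>gen1 \<omega> k. \<exists>b\<in>gen2 \<omega> k. \<omega> (CrossB a b) = 1)"
    if "(conducting_adj (N_edges \<omega> k) N_ends (N_res \<omega>))\<^sup>*\<^sup>* x y" and "isl x" for x y
    using that
  proof (induction rule: rtranclp_induct)
    case (step y z)
    show ?case
    proof (cases "isl y \<and> \<not> isl z")
      case True
      from step(2) obtain e where e: "e \<in> N_edges \<omega> k" "N_res \<omega> e \<noteq> \<infinity>"
        "N_ends e = (y, z) \<or> N_ends e = (z, y)"
        unfolding conducting_adj_def by blast
      with True show ?thesis
        by (cases e) (auto simp: N_edges_def split: if_splits)
    qed (use step in auto)
  qed simp
  from this[of "Inl []" "Inr []"] assms show ?thesis
    by (simp add: roots_connected_def conducting_path_def)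
qed

lemma conducting_path_root_Inl:
  "in_tree (off1 \<omega>) v \<Longrightarrow> length v \<le> k \<Longrightarrow>
    (conducting_adj (N_edges \<omega> k) N_ends (N_res \<omega>))\<^sup>*\<^sup>* (Inl []) (Inl v)"
proof (induction v rule: rev_induct)
  case (snoc i v)
  then have "E1 (v @ [i]) \<in> N_edges \<omega> k"
    by (auto simp: N_edges_def trunc1_def)
  then have "conducting_adj (N_edges \<omega> k) N_ends (N_res \<omega>) (Inl v) (Inl (v @ [i]))"
    unfolding conducting_adj_def by (intro bexI[of _ "E1 (v @ [i])"]) auto
  with snoc show ?case
    by (auto intro: rtranclp.rtrancl_into_rtrancl)
qed simp

lemma conducting_path_Inr_root:
  "in_tree (off2 \<omega>) v \<Longrightarrow> length v \<le> k \<Longrightarrow>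
    (conducting_adj (N_edges \<omega> k) N_ends (N_res \<omega>))\<^sup>*\<^sup>* (Inr v) (Inr [])"
proof (induction v rule: rev_induct)
  case (snoc i v)
  then have "E2 (v @ [i]) \<in> N_edges \<omega> k"
    by (auto simp: N_edges_def trunc2_def)
  then have "conducting_adj (N_edges \<omega> k) N_ends (N_res \<omega>) (Inr (v @ [i])) (Inr v)"
    unfolding conducting_adj_def by (intro bexI[of _ "E2 (v @ [i])"]) auto
  with snoc show ?case
    by (auto intro: converse_rtranclp_into_rtranclp)
qed simp

lemma cross_edge_imp_roots_connected:
  assumes "a \<in> gen1 \<omega> k" and "b \<in> gen2 \<omega> k" and "\<omega> (CrossB a b) = 1"
  shows "roots_connected \<omega> k"
proof -
  let ?R = "conducting_adj (N_edges \<omega> k) N_ends (N_res \<omega>)"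
  have "?R\<^sup>*\<^sup>* (Inl []) (Inl a)" and "?R\<^sup>*\<^sup>* (Inr b) (Inr [])"
    using assms by (auto simp: gen1_def gen2_def intro!: conducting_path_root_Inl conducting_path_Inr_root)
  moreover have "?R (Inl a) (Inr b)"
    using assms unfolding conducting_adj_def by (intro bexI[of _ "EC a b"]) (auto simp: N_edges_def)
  ultimately show ?thesis
    unfolding roots_connected_def conducting_path_def
    by (meson rtranclp.rtrancl_into_rtrancl rtranclp_trans)
qed

lemma roots_connected_iff_cross_edge:
  "roots_connected \<omega> k \<longleftrightarrow> (\<exists>a\<in>gen1 \<omega> k. \<exists>b\<in>gen2 \<omega> k. \<omega> (CrossB a b) = 1)"
  using roots_connected_imp_cross_edge cross_edge_imp_roots_connected by blast

lemma rho_le_imp_roots_connected: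
  assumes "rho \<omega> k \<le> ereal c"
  shows "roots_connected \<omega> k"
proof -
  obtain \<theta> where flow: "unit_flow (N_vertices \<omega> k) (N_edges \<omega> k) N_ends (N_res \<omega>) (Inl []) (Inr []) \<theta>"
    using assms by (fastforce simp: rho_def eff_resistance_def top_ereal_def)
  show ?thesis
    unfolding roots_connected_def
    by (rule unit_flow_imp_conducting_path[OF finite_N_vertices finite_N_edges N_ends_in_N_vertices
          root_in_N_vertices sum.distinct(1) flow])
qed

lemma root_path_through_cross_edge:
  assumes a: "a \<in> gen1 \<omega> k" and b: "b \<in> gen2 \<omega> k"
  defines "pv \<equiv> \<lambda>i. if i \<le> k then Inl (take i a) else Inr (take (2 * k + 1 - i) b)"
    and "pe \<equiv> \<lambda>i. if i < k then E1 (take (Suc i) a) else if i = k then EC a b else E2 (take (2 * k + 1 - i) b)"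
  shows "network_path (N_edges \<omega> k) N_ends pe pv (2 * k + 1)"
    and "pv 0 = Inl []" and "pv (2 * k + 1) = Inr []"
    and "\<And>i. i < 2 * k + 1 \<Longrightarrow> pe i \<in> range E1 \<union> range E2 \<union> {EC a b}"
proof -
  have la: "length a = k" and ta: "in_tree (off1 \<omega>) a" and lb: "length b = k" and tb: "in_tree (off2 \<omega>) b"
    using a b by (auto simp: gen1_def gen2_def)
  show "network_path (N_edges \<omega> k) N_ends pe pv (2 * k + 1)"
  proof
    show "inj_on pe {..<2 * k + 1}"
      using la lb by (auto simp: inj_on_def pe_def split: if_splits dest!: arg_cong[where f = length])
    show "pe ` {..<2 * k + 1} \<subseteq> N_edges \<omega> k"
      using a b la lb ta tb
      by (auto simp: pe_def N_edges_def trunc1_def trunc2_def in_tree_take min_def)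
    show "N_ends (pe i) = (pv i, pv (Suc i)) \<or> N_ends (pe i) = (pv (Suc i), pv i)" if "i < 2 * k + 1" for i
    proof -
      consider "i < k" | "i = k" | "k < i"
        by linarith
      then show ?thesis
      proof cases
        case 3
        then have "2 * k + 1 - Suc i = 2 * k + 1 - i - 1"
          by simp
        with 3 that lb show ?thesis
          by (simp add: pe_def pv_def butlast_take)
      qed (use la lb in \<open>simp_all add: pe_def pv_def butlast_take\<close>)
    qed
  qed (rule finite_N_edges)
  show "pv 0 = Inl []" "pv (2 * k + 1) = Inr []"
    by (simp_all add: pv_def)
  show "pe i \<in> range E1 \<union> range E2 \<union> {EC a b}" for i
    by (simp add: pe_def)
qed

lemma rho_le_of_cross_edge:
  assumes "a \<in> gen1 \<omega> k" and "b \<in> gen2 \<omega> k" and "\<omega> (CrossB a b) = 1"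
    and "\<And>v. \<omega> (Res1 v) \<le> K" and "\<And>v. \<omega> (Res2 v) \<le> K" and "\<And>a b. \<omega> (CrossR a b) \<le> K"
  shows "rho \<omega> k \<le> ereal ((2 * real k + 1) * K)"
proof -
  note path = root_path_through_cross_edge[OF assms(1,2)]
  have "N_res \<omega> e \<noteq> \<infinity> \<and> real_of_ereal (N_res \<omega> e) \<le> K" if "e \<in> range E1 \<union> range E2 \<union> {EC a b}" for e
    using that assms(3-6) by auto
  then show ?thesis
    unfolding rho_def using network_path.eff_resistance_le_path[OF path(1-3)] path(4)
    by (simp add: add.commute)
qed

lemma Inf_ereal_le_iff:
  "Inf {ereal (f x) | x. P x} \<le> ereal c \<longleftrightarrow> (\<forall>m::nat. \<exists>x. P x \<and> f x < c + 1 / Suc m)"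
proof
  assume le: "Inf {ereal (f x) | x. P x} \<le> ereal c"
  show "\<forall>m::nat. \<exists>x. P x \<and> f x < c + 1 / Suc m"
  proof
    fix m :: nat
    have "Inf {ereal (f x) | x. P x} < ereal (c + 1 / Suc m)"
      using le by (rule le_less_trans) simp
    then show "\<exists>x. P x \<and> f x < c + 1 / Suc m"
      by (auto simp: Inf_less_iff)
  qed
next
  assume approx: "\<forall>m::nat. \<exists>x. P x \<and> f x < c + 1 / Suc m"
  show "Inf {ereal (f x) | x. P x} \<le> ereal c"
    unfolding Inf_le_iff
  proof (intro allI impI)
    fix y :: ereal
    assume "ereal c < y"
    then obtain m :: nat where m: "ereal (c + 1 / Suc m) < y"
    proof (cases y)
      case (real r)
      with \<open>ereal c < y\<close> obtain m :: nat where "1 / Suc m < r - c"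
        using nat_approx_posE[of "r - c"] by auto
      with real have "ereal (c + 1 / Suc m) < y"
        by simp
      then show ?thesis
        by (rule that)
    qed (use that in auto)
    from approx obtain x where "P x" and "f x < c + 1 / Suc m"
      by blast
    then have "ereal (f x) < ereal (c + 1 / Suc m)"
      by simp
    then have "ereal (f x) < y"
      using m by (rule less_trans)
    with \<open>P x\<close> show "\<exists>z\<in>{ereal (f x) | x. P x}. z < y"
      by blast
  qed
qed

text \<open>Given the finitely many possible values of the trees and of the set of present cross
  edges, \<open>\<rho>\<close> is an infimum of continuous functions of the resistances; this is how the event
  \<open>\<rho>(n,k) \<le> c\<close> is shown to be measurable.\<close>

definition cross_set :: "(idx \<Rightarrow> real) \<Rightarrow> nat \<Rightarrow> (nat list \<times> nat list) set" where
  "cross_set \<omega> k = {(a, b). a \<in> gen1 \<omega> k \<and> b \<in> gen2 \<omega> k \<and> \<omega> (CrossB a b) = 1}"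

definition tree_edges :: "nat \<Rightarrow> nat list set \<Rightarrow> nat list set \<Rightarrow> nedge set" where
  "tree_edges k T1 T2 = E1 ` {v\<in>T1. v \<noteq> []} \<union> E2 ` {v\<in>T2. v \<noteq> []}
     \<union> (\<lambda>(v', v''). EC v' v'') ` ({v\<in>T1. length v = k} \<times> {v\<in>T2. length v = k})"

fun res_pattern :: "(nat list \<times> nat list) set \<Rightarrow> nedge \<Rightarrow> ereal" where
  "res_pattern D (EC a b) = (if (a, b) \<in> D then 0 else \<infinity>)"
| "res_pattern D _ = 0"

fun res_coord :: "nedge \<Rightarrow> idx" where
  "res_coord (E1 v) = Res1 v"
| "res_coord (E2 v) = Res2 v"
| "res_coord (EC a b) = CrossR a b"

definition pattern_energy :: "nedge set \<Rightarrow> (nat list \<times> nat list) set \<Rightarrow> (nedge \<Rightarrow> real) \<Rightarrow> (idx \<Rightarrow> real) \<Rightarrow> real" where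
  "pattern_energy Ed D \<theta> \<omega> = (\<Sum>e\<in>{e\<in>Ed. res_pattern D e \<noteq> \<infinity>}. \<omega> (res_coord e) * (\<theta> e)\<^sup>2)"

lemma N_edges_eq_tree_edges: "N_edges \<omega> k = tree_edges k (trunc1 \<omega> k) (trunc2 \<omega> k)"
  by (auto simp: N_edges_def tree_edges_def gen1_def gen2_def trunc1_def trunc2_def)

lemma N_res_eq_infinity_iff:
  "e \<in> N_edges \<omega> k \<Longrightarrow> N_res \<omega> e = \<infinity> \<longleftrightarrow> res_pattern (cross_set \<omega> k) e = \<infinity>"
  by (cases e) (auto simp: N_edges_def cross_set_def)

lemma rho_le_iff:
  "rho \<omega> k \<le> ereal c \<longleftrightarrow> (\<forall>m::nat. \<exists>\<theta>.
    unit_flow (Inl ` trunc1 \<omega> k \<union> Inr ` trunc2 \<omega> k) (tree_edges k (trunc1 \<omega> k) (trunc2 \<omega> k)) N_ends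
      (res_pattern (cross_set \<omega> k)) (Inl []) (Inr []) \<theta>
    \<and> pattern_energy (tree_edges k (trunc1 \<omega> k) (trunc2 \<omega> k)) (cross_set \<omega> k) \<theta> \<omega> < c + 1 / Suc m)"
proof -
  have "unit_flow (N_vertices \<omega> k) (N_edges \<omega> k) N_ends (N_res \<omega>) = unit_flow
      (Inl ` trunc1 \<omega> k \<union> Inr ` trunc2 \<omega> k) (tree_edges k (trunc1 \<omega> k) (trunc2 \<omega> k)) N_ends (res_pattern (cross_set \<omega> k))"
    using N_res_eq_infinity_iff
    by (auto simp: fun_eq_iff unit_flow_def N_vertices_def N_edges_eq_tree_edges[symmetric])
  moreover have "flow_energy (N_edges \<omega> k) (N_res \<omega>) \<theta>
      = pattern_energy (tree_edges k (trunc1 \<omega> k) (trunc2 \<omega> k)) (cross_set \<omega> k) \<theta> \<omega>" for \<theta>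
  proof -
    have "{e\<in>N_edges \<omega> k. N_res \<omega> e \<noteq> \<infinity>} = {e\<in>N_edges \<omega> k. res_pattern (cross_set \<omega> k) e \<noteq> \<infinity>}"
      using N_res_eq_infinity_iff by blast
    then show ?thesis
      unfolding flow_energy_def pattern_energy_def N_edges_eq_tree_edges[symmetric]
    proof (intro sum.cong refl)
      fix e
      assume "e \<in> {e\<in>N_edges \<omega> k. res_pattern (cross_set \<omega> k) e \<noteq> \<infinity>}"
      then show "real_of_ereal (N_res \<omega> e) * (\<theta> e)\<^sup>2 = \<omega> (res_coord e) * (\<theta> e)\<^sup>2"
        by (cases e) (auto simp: cross_set_def)
    qed
  qed
  ultimately show ?thesis
    by (simp add: rho_def eff_resistance_def Inf_ereal_le_iff)
qed

lemma open_pattern_energy_less: "open {\<omega>. \<exists>\<theta>. U \<theta> \<and> pattern_energy Ed D \<theta> \<omega> < c}"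
proof -
  have "{\<omega>. \<exists>\<theta>. U \<theta> \<and> pattern_energy Ed D \<theta> \<omega> < c} = (\<Union>\<theta>\<in>{\<theta>. U \<theta>}. {\<omega>. pattern_energy Ed D \<theta> \<omega> < c})"
    by auto
  moreover have "open {\<omega>. pattern_energy Ed D \<theta> \<omega> < c}" for \<theta>
    unfolding pattern_energy_def by (intro open_Collect_less continuous_intros) auto
  ultimately show ?thesis
    by auto
qed

instance idx :: countable
  by countable_datatype

section \<open>The random network\<close>

definition depends_on :: "idx set \<Rightarrow> ((idx \<Rightarrow> real) \<Rightarrow> 'b) \<Rightarrow> bool" where
  "depends_on A g \<longleftrightarrow> (\<forall>\<omega> \<omega>'. (\<forall>i\<in>A. \<omega> i = \<omega>' i) \<longrightarrow> g \<omega> = g \<omega>')"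

lemma depends_on_restrict: "depends_on A g \<Longrightarrow> g (restrict \<omega> A) = g \<omega>"
  unfolding depends_on_def by auto

lemma depends_on_mono: "depends_on A g \<Longrightarrow> A \<subseteq> B \<Longrightarrow> depends_on B g"
  unfolding depends_on_def by blast

lemma depends_on_comp: "depends_on A g \<Longrightarrow> depends_on A (\<lambda>\<omega>. h (g \<omega>))"
  unfolding depends_on_def by metis

lemma generation_depends_on:
  "depends_on (c ` {u. length u < k}) (\<lambda>\<omega>. generation (offspring c \<omega>) k)"
  unfolding depends_on_def by (auto intro!: generation_cong simp: offspring_def)

lemma countable_finite_sets_of_length: "countable {A :: nat list set. finite A \<and> A \<subseteq> {v. length v = k}}"
  by (rule countable_subset[OF _ countable_Collect_finite]) auto

lemma generation_in_finite_sets_of_length: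
  "generation off k \<in> {A. finite A \<and> A \<subseteq> {v. length v = k}}"
  using finite_generation[of off k] by (auto simp: generation_def)

lemma prod_of_bool: "finite I \<Longrightarrow> (\<Prod>i\<in>I. of_bool (P i) :: 'a :: comm_semiring_1) = of_bool (\<forall>i\<in>I. P i)"
  by (induction I rule: finite_induct) auto

lemma one_minus_power_le_exp:
  fixes p x :: real
  assumes "0 \<le> p" and "p \<le> 1" and "0 \<le> x" and "x < real a" and "x < real b"
  shows "(1 - p) ^ (a * b) \<le> exp (- p * x\<^sup>2)"
proof -
  have "(1 - p) ^ (a * b) \<le> exp (-p) ^ (a * b)"
    using assms exp_ge_add_one_self[of "-p"] by (intro power_mono) auto
  also have "\<dots> = exp (- p * real (a * b))"
    by (simp add: mult.commute flip: exp_of_nat_mult)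
  also have "\<dots> \<le> exp (- p * x\<^sup>2)"
    using assms by (simp add: power2_eq_square mult_mono mult_left_mono)
  finally show ?thesis .
qed

lemma powr_div_power_le_at_threshold:
  fixes n k :: nat and \<epsilon> \<delta> :: real
  assumes "1 \<le> n" and "1 < \<delta>" and "(1 + 2 * \<epsilon>) / (2 * ln \<delta>) * ln (real n) \<le> real k"
  shows "real n powr ((1 + \<epsilon>) / 2) / \<delta> ^ k \<le> real n powr (- \<epsilon> / 2)"
proof -
  have "(1 + 2 * \<epsilon>) / (2 * ln \<delta>) * ln (real n) * ln \<delta> \<le> real k * ln \<delta>"
    using assms by (intro mult_right_mono) auto
  moreover have "(1 + 2 * \<epsilon>) / (2 * ln \<delta>) * ln (real n) * ln \<delta> = (1 + 2 * \<epsilon>) / 2 * ln (real n)"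
    using assms by (simp add: field_simps)
  ultimately have "(1 + 2 * \<epsilon>) / 2 * ln (real n) \<le> real k * ln \<delta>"
    by simp
  then have "real n powr ((1 + 2 * \<epsilon>) / 2) \<le> exp (real k * ln \<delta>)"
    using assms by (simp add: powr_def mult.commute)
  also have "\<dots> = \<delta> ^ k"
    using assms by (simp add: exp_of_nat_mult)
  finally have "real n powr ((1 + 2 * \<epsilon>) / 2) \<le> \<delta> ^ k" .
  then have "real n powr ((1 + \<epsilon>) / 2) / \<delta> ^ k \<le> real n powr ((1 + \<epsilon>) / 2) / real n powr ((1 + 2 * \<epsilon>) / 2)"
    using assms by (intro divide_left_mono) auto
  also have "\<dots> = real n powr (- \<epsilon> / 2)"
    using assms by (simp add: powr_diff [symmetric] field_simps)
  finally show ?thesis .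
qed

lemma exp_le_at_threshold:
  fixes n :: nat and \<epsilon> p :: real
  assumes "1 \<le> n" and "0 \<le> \<epsilon>" and "1 / real n \<le> p"
  shows "exp (- p * (real n powr ((1 + \<epsilon>) / 2))\<^sup>2) \<le> real n powr (- \<epsilon>)"
proof -
  have "real n powr \<epsilon> = 1 / real n * (real n powr ((1 + \<epsilon>) / 2))\<^sup>2"
    using assms by (simp add: power2_eq_square powr_add [symmetric] powr_add)
  also have "\<dots> \<le> p * (real n powr ((1 + \<epsilon>) / 2))\<^sup>2"
    using assms by (intro mult_right_mono) auto
  finally have "exp (- p * (real n powr ((1 + \<epsilon>) / 2))\<^sup>2) \<le> exp (- (real n powr \<epsilon>))"
    by simp
  also have "\<dots> \<le> 1 / real n powr \<epsilon>"
    unfolding exp_minus inverse_eq_divide using assms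
    by (intro divide_left_mono less_imp_le[OF exp_gt_self]) auto
  also have "\<dots> = real n powr (- \<epsilon>)"
    using assms by (simp add: powr_minus_divide)
  finally show ?thesis .
qed

locale random_network =
  fixes \<mu> :: "real measure" and \<delta> p :: real
  assumes prob_space_\<mu>: "prob_space \<mu>" and sets_\<mu>: "sets \<mu> = sets borel"
    and \<delta>_pos: "0 < \<delta>" and p_nonneg: "0 \<le> p" and p_le_one: "p \<le> 1"
begin

abbreviation M :: "idx \<Rightarrow> real measure" where
  "M \<equiv> coord_dist \<mu> \<delta> p"

sublocale product_prob_space M UNIV
proof -
  have "prob_space (M i)" for i
    by (cases i) (simp_all add: coord_dist_def prob_space_\<mu> prob_space_measure_pmf)
  then interpret prob_space "M i" for i .
  show "product_prob_space M"
    by unfold_locales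
qed

abbreviation net :: "(idx \<Rightarrow> real) measure" where
  "net \<equiv> PiM UNIV M"

definition poisson_family :: "(nat list \<Rightarrow> idx) \<Rightarrow> bool" where
  "poisson_family c \<longleftrightarrow> inj c \<and> (\<forall>v. M (c v) = measure_pmf (map_pmf real (poisson_pmf \<delta>)))"

lemma poisson_family_Off1: "poisson_family Off1"
  and poisson_family_Off2: "poisson_family Off2"
  by (simp_all add: poisson_family_def coord_dist_def inj_def)

lemma space_M [simp]: "space (M i) = UNIV"
  using sets_eq_imp_space_eq[OF sets_\<mu>] by (cases i) (simp_all add: coord_dist_def)

lemma id_measurable_M: "(\<lambda>x. x) \<in> M i \<rightarrow>\<^sub>M borel"
  by (cases i) (simp_all add: coord_dist_def measurable_cong_sets[OF sets_\<mu> refl])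

lemma space_net [simp]: "space net = UNIV"
  by (simp add: space_PiM)

lemma coordinate_measurable [measurable]: "(\<lambda>\<omega>. \<omega> i) \<in> borel_measurable net"
  using measurable_compose[OF measurable_component_singleton[of i UNIV M] id_measurable_M] by simp

lemma offspring_measurable [measurable]: "(\<lambda>\<omega>. offspring c \<omega> v) \<in> net \<rightarrow>\<^sub>M count_space UNIV"
  unfolding offspring_def by measurable

lemma in_tree_offspring_measurable [measurable]: "Measurable.pred net (\<lambda>\<omega>. in_tree (offspring c \<omega>) v)"
  unfolding in_tree_def by measurable

lemma generation_eq_measurable [measurable]:
  "Measurable.pred net (\<lambda>\<omega>. generation (offspring c \<omega>) k = A)"
proof -
  have "(\<lambda>\<omega>. generation (offspring c \<omega>) k = A)
      = (\<lambda>\<omega>. \<forall>v. v \<in> A \<longleftrightarrow> in_tree (offspring c \<omega>) v \<and> length v = k)"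
    by (auto simp: generation_def fun_eq_iff)
  then show ?thesis
    by simp
qed

lemma card_generation_measurable [measurable]:
  "(\<lambda>\<omega>. card (generation (offspring c \<omega>) k)) \<in> net \<rightarrow>\<^sub>M count_space UNIV"
proof -
  let ?C = "{A :: nat list set. finite A \<and> A \<subseteq> {v. length v = k}}"
  have "(\<lambda>\<omega>. generation (offspring c \<omega>) k) \<in> net \<rightarrow>\<^sub>M count_space ?C"
  proof (subst measurable_count_space_eq_countable[OF countable_finite_sets_of_length], intro conjI ballI)
    show "(\<lambda>\<omega>. generation (offspring c \<omega>) k) \<in> space net \<rightarrow> ?C"
      using generation_in_finite_sets_of_length by blast
    fix A
    have "Measurable.pred net (\<lambda>\<omega>. generation (offspring c \<omega>) k = A)"
      by measurable
    then show "(\<lambda>\<omega>. generation (offspring c \<omega>) k) -` {A} \<inter> space net \<in> sets net"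
      by (simp add: pred_def vimage_def)
  qed
  then show ?thesis
    by (rule measurable_compose) simp
qed

lemma emeasure_net_UNIV [simp]: "emeasure net UNIV = 1"
  using P.emeasure_space_1 by simp

lemma sets_net_Collect: "Measurable.pred net P \<Longrightarrow> {\<omega>. P \<omega>} \<in> sets net"
  by (simp add: pred_def)

lemma emeasure_net_eq_measure: "emeasure net A = ennreal (measure net A)"
  by (rule P.emeasure_eq_measure)

lemma indep_coordinates: "P.indep_vars M (\<lambda>i \<omega>. \<omega> i) UNIV"
proof (subst P.indep_vars_iff_distr_eq_PiM)
  have "distr net net (\<lambda>x. \<lambda>i\<in>UNIV. x i) = distr net net (\<lambda>x. x)"
    by (rule distr_cong) auto
  also have "\<dots> = net"
    by (rule distr_id)
  also have "\<dots> = (\<Pi>\<^sub>M i\<in>UNIV. distr net (M i) (\<lambda>\<omega>. \<omega> i))"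
    by (rule PiM_cong) (auto simp: PiM_component)
  finally show "distr net (\<Pi>\<^sub>M i\<in>UNIV. M i) (\<lambda>x. \<lambda>i\<in>UNIV. x i) = (\<Pi>\<^sub>M i\<in>UNIV. distr net (M i) (\<lambda>\<omega>. \<omega> i))" .
qed simp_all

lemma id_measurable_PiM: "(\<lambda>x. x) \<in> PiM A M \<rightarrow>\<^sub>M net"
proof (rule measurable_PiM_single')
  fix i :: idx
  show "(\<lambda>x. x i) \<in> PiM A M \<rightarrow>\<^sub>M M i"
  proof (cases "i \<in> A")
    case False
    then have "(\<lambda>x. x i) \<in> PiM A M \<rightarrow>\<^sub>M M i \<longleftrightarrow> (\<lambda>x. undefined) \<in> PiM A M \<rightarrow>\<^sub>M M i"
      by (intro measurable_cong) (auto simp: space_PiM PiE_def extensional_def)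
    then show ?thesis
      by simp
  qed simp
qed (auto simp: space_PiM)

lemma nn_integral_mult_indep_blocks:
  fixes g h :: "(idx \<Rightarrow> real) \<Rightarrow> ennreal"
  assumes "A \<inter> B = {}" and [measurable]: "g \<in> borel_measurable net" "h \<in> borel_measurable net"
    and g: "depends_on A g" and h: "depends_on B h"
  shows "(\<integral>\<^sup>+\<omega>. g \<omega> * h \<omega> \<partial>net) = (\<integral>\<^sup>+\<omega>. g \<omega> \<partial>net) * (\<integral>\<^sup>+\<omega>. h \<omega> \<partial>net)"
proof -
  have "P.indep_var (PiM A M) (\<lambda>\<omega>. restrict \<omega> A) (PiM B M) (\<lambda>\<omega>. restrict \<omega> B)"
    using P.indep_var_restrict[OF indep_coordinates assms(1)] by simp
  moreover have "g \<in> borel_measurable (PiM A M)" "h \<in> borel_measurable (PiM B M)"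
    using measurable_compose[OF id_measurable_PiM assms(2)] measurable_compose[OF id_measurable_PiM assms(3)]
    by simp_all
  ultimately have indep: "P.indep_var borel (g \<circ> (\<lambda>\<omega>. restrict \<omega> A)) borel (h \<circ> (\<lambda>\<omega>. restrict \<omega> B))"
    by (rule P.indep_var_compose)
  have restrict_eq: "g \<circ> (\<lambda>\<omega>. restrict \<omega> A) = g" "h \<circ> (\<lambda>\<omega>. restrict \<omega> B) = h"
    using depends_on_restrict[OF g] depends_on_restrict[OF h] by (auto simp: fun_eq_iff)
  from indep have "P.indep_vars (\<lambda>_. borel) (case_bool g h) UNIV"
    unfolding restrict_eq P.indep_var_def
    by (rule P.indep_vars_cong[THEN iffD1, rotated 3]) (auto split: bool.split)
  from P.indep_vars_nn_integral[OF _ this] show ?thesis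
    by (simp add: UNIV_bool mult.commute)
qed

lemma nn_integral_coordinate:
  assumes [measurable]: "\<phi> \<in> borel_measurable borel"
  shows "(\<integral>\<^sup>+\<omega>. \<phi> (\<omega> i) \<partial>net) = (\<integral>\<^sup>+x. \<phi> x \<partial>M i)"
proof -
  have "\<phi> \<in> borel_measurable (M i)"
    using measurable_compose[OF id_measurable_M assms] by simp
  then have "(\<integral>\<^sup>+x. \<phi> x \<partial>distr net (M i) (\<lambda>\<omega>. \<omega> i)) = (\<integral>\<^sup>+\<omega>. \<phi> (\<omega> i) \<partial>net)"
    by (intro nn_integral_distr) auto
  then show ?thesis
    by (simp add: PiM_component)
qed

lemma nn_integral_prod_coordinates:
  assumes "finite S" and [measurable]: "\<And>i. \<phi> i \<in> borel_measurable borel"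
  shows "(\<integral>\<^sup>+\<omega>. (\<Prod>i\<in>S. \<phi> i (\<omega> i)) \<partial>net) = (\<Prod>i\<in>S. \<integral>\<^sup>+x. \<phi> i x \<partial>M i)"
proof -
  have "\<And>i. \<phi> i \<in> M i \<rightarrow>\<^sub>M borel"
    using measurable_compose[OF id_measurable_M assms(2)] by simp
  from P.indep_vars_compose2[OF P.indep_vars_subset[OF indep_coordinates subset_UNIV] this]
  have "P.indep_vars (\<lambda>_. borel) (\<lambda>i \<omega>. \<phi> i (\<omega> i)) S"
    by simp
  then have "(\<integral>\<^sup>+\<omega>. (\<Prod>i\<in>S. \<phi> i (\<omega> i)) \<partial>net) = (\<Prod>i\<in>S. \<integral>\<^sup>+\<omega>. \<phi> i (\<omega> i) \<partial>net)"
    by (rule P.indep_vars_nn_integral[OF assms(1)]) simp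
  then show ?thesis
    by (simp add: nn_integral_coordinate)
qed

lemma nn_integral_condition_on:
  fixes S :: "(idx \<Rightarrow> real) \<Rightarrow> 'c" and h :: "'c \<Rightarrow> (idx \<Rightarrow> real) \<Rightarrow> ennreal"
  assumes "countable C" and S_in: "\<And>\<omega>. S \<omega> \<in> C"
    and S_measurable: "\<And>c. c \<in> C \<Longrightarrow> Measurable.pred net (\<lambda>\<omega>. S \<omega> = c)"
    and h_measurable: "\<And>c. c \<in> C \<Longrightarrow> h c \<in> borel_measurable net"
    and S: "depends_on L S" and h: "\<And>c. c \<in> C \<Longrightarrow> depends_on L' (h c)" and "L \<inter> L' = {}"
  shows "(\<integral>\<^sup>+\<omega>. h (S \<omega>) \<omega> \<partial>net)
    = (\<integral>\<^sup>+c. emeasure net {\<omega>. S \<omega> = c} * (\<integral>\<^sup>+\<omega>. h c \<omega> \<partial>net) \<partial>count_space C)"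
proof -
  have fibre_measurable [measurable]: "{\<omega>. S \<omega> = c} \<in> sets net" if "c \<in> C" for c
    using S_measurable[OF that] by (simp add: pred_def)
  have indicator_fibre: "indicator {c} (S \<omega>) = (indicator {\<omega>. S \<omega> = c} \<omega> :: ennreal)" for c \<omega>
    by (simp split: split_indicator)
  have "(\<integral>\<^sup>+\<omega>. h (S \<omega>) \<omega> \<partial>net) = (\<integral>\<^sup>+\<omega>. \<integral>\<^sup>+c. h c \<omega> * indicator {S \<omega>} c \<partial>count_space C \<partial>net)"
    by (intro nn_integral_cong, subst nn_integral_indicator_singleton) (auto simp: S_in)
  also have "\<dots> = (\<integral>\<^sup>+\<omega>. \<integral>\<^sup>+c. h c \<omega> * indicator {c} (S \<omega>) \<partial>count_space C \<partial>net)"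
    by (intro nn_integral_cong) (auto split: split_indicator)
  also have "\<dots> = (\<integral>\<^sup>+c. \<integral>\<^sup>+\<omega>. h c \<omega> * indicator {c} (S \<omega>) \<partial>net \<partial>count_space C)"
    using h_measurable
    by (intro nn_integral_count_space_nn_integral[OF \<open>countable C\<close>]) (simp add: indicator_fibre)
  also have "\<dots> = (\<integral>\<^sup>+c. emeasure net {\<omega>. S \<omega> = c} * (\<integral>\<^sup>+\<omega>. h c \<omega> \<partial>net) \<partial>count_space C)"
  proof (intro nn_integral_cong)
    fix c assume "c \<in> space (count_space C)"
    then have c: "c \<in> C" by simp
    have "depends_on L (indicator {\<omega>. S \<omega> = c} :: _ \<Rightarrow> ennreal)"
      using S unfolding depends_on_def by (auto split: split_indicator) metis+
    then have "(\<integral>\<^sup>+\<omega>. indicator {\<omega>. S \<omega> = c} \<omega> * h c \<omega> \<partial>net)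
        = (\<integral>\<^sup>+\<omega>. indicator {\<omega>. S \<omega> = c} \<omega> \<partial>net) * (\<integral>\<^sup>+\<omega>. h c \<omega> \<partial>net)"
      using c h_measurable h assms(7) by (intro nn_integral_mult_indep_blocks) auto
    then show "(\<integral>\<^sup>+\<omega>. h c \<omega> * indicator {c} (S \<omega>) \<partial>net) = emeasure net {\<omega>. S \<omega> = c} * (\<integral>\<^sup>+\<omega>. h c \<omega> \<partial>net)"
      using c by (simp add: indicator_fibre mult.commute)
  qed
  finally show ?thesis .
qed

lemma nn_integral_emeasure_fibres:
  fixes S :: "(idx \<Rightarrow> real) \<Rightarrow> 'c"
  assumes "countable C" and "\<And>\<omega>. S \<omega> \<in> C" and "\<And>c. c \<in> C \<Longrightarrow> Measurable.pred net (\<lambda>\<omega>. S \<omega> = c)"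
  shows "(\<integral>\<^sup>+c. emeasure net {\<omega>. S \<omega> = c} \<partial>count_space C) = 1"
  using nn_integral_condition_on[OF assms, of "\<lambda>_ _. 1" UNIV "{}"]
  by (simp add: depends_on_def P.emeasure_space_1) (metis ext)

lemma nn_integral_prod_offspring_power:
  assumes "poisson_family c" and "finite A" and "0 \<le> t"
  shows "(\<integral>\<^sup>+\<omega>. (\<Prod>v\<in>A. ennreal (t ^ offspring c \<omega> v)) \<partial>net) = ennreal (poisson_pgf \<delta> t ^ card A)"
proof -
  have c: "inj c" and poisson: "\<And>v. M (c v) = measure_pmf (map_pmf real (poisson_pmf \<delta>))"
    using assms(1) by (simp_all add: poisson_family_def)
  have "(\<integral>\<^sup>+\<omega>. (\<Prod>v\<in>A. ennreal (t ^ offspring c \<omega> v)) \<partial>net)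
      = (\<integral>\<^sup>+\<omega>. (\<Prod>i\<in>c ` A. ennreal (t ^ nat \<lfloor>\<omega> i\<rfloor>)) \<partial>net)"
    using c by (subst prod.reindex) (auto simp: offspring_def inj_on_def inj_def)
  also have "\<dots> = (\<Prod>i\<in>c ` A. \<integral>\<^sup>+x. ennreal (t ^ nat \<lfloor>x\<rfloor>) \<partial>M i)"
    using assms by (intro nn_integral_prod_coordinates) auto
  also have "\<dots> = (\<Prod>i\<in>c ` A. ennreal (poisson_pgf \<delta> t))"
    using assms \<delta>_pos by (intro prod.cong refl) (auto simp: poisson nn_integral_poisson_power)
  also have "\<dots> = ennreal (poisson_pgf \<delta> t ^ card A)"
    using c by (simp add: card_image inj_on_def inj_def ennreal_power)
  finally show ?thesis .
qed

text \<open>Conditioning on generation \<open>k\<close>, which depends only on the offspring numbers of earlier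
  generations, the size of generation \<open>k + 1\<close> is a sum of independent Poisson variables.\<close>

lemma nn_integral_power_card_generation:
  assumes c: "poisson_family c" and "0 \<le> t" and "t \<le> 1"
  shows "(\<integral>\<^sup>+\<omega>. ennreal (t ^ card (generation (offspring c \<omega>) k)) \<partial>net) = ennreal ((poisson_pgf \<delta> ^^ k) t)"
  using assms(2,3)
proof (induction k arbitrary: t)
  case (Suc k)
  let ?C = "{A :: nat list set. finite A \<and> A \<subseteq> {v. length v = k}}"
  let ?S = "\<lambda>\<omega>. generation (offspring c \<omega>) k"
  have disjoint: "c ` {u. length u < k} \<inter> c ` {v. length v = k} = {}"
    using c by (auto simp: poisson_family_def inj_def)
  have condition: "(\<integral>\<^sup>+\<omega>. h (?S \<omega>) \<omega> \<partial>net)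
      = (\<integral>\<^sup>+A. emeasure net {\<omega>. ?S \<omega> = A} * (\<integral>\<^sup>+\<omega>. h A \<omega> \<partial>net) \<partial>count_space ?C)"
    if "\<And>A. h A \<in> borel_measurable net" and "\<And>A. A \<in> ?C \<Longrightarrow> depends_on (c ` {v. length v = k}) (h A)"
    for h :: "nat list set \<Rightarrow> (idx \<Rightarrow> real) \<Rightarrow> ennreal"
    using that generation_in_finite_sets_of_length
    by (intro nn_integral_condition_on[OF countable_finite_sets_of_length _ _ _ generation_depends_on _ disjoint])
      auto
  have "(\<integral>\<^sup>+\<omega>. ennreal (t ^ card (generation (offspring c \<omega>) (Suc k))) \<partial>net)
      = (\<integral>\<^sup>+\<omega>. (\<Prod>v\<in>?S \<omega>. ennreal (t ^ offspring c \<omega> v)) \<partial>net)"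
    using Suc.prems by (simp add: card_generation_Suc power_sum prod_ennreal)
  also have "\<dots> = (\<integral>\<^sup>+A. emeasure net {\<omega>. ?S \<omega> = A} * ennreal (poisson_pgf \<delta> t ^ card A) \<partial>count_space ?C)"
  proof (subst condition)
    show "depends_on (c ` {v. length v = k}) (\<lambda>\<omega>. \<Prod>v\<in>A. ennreal (t ^ offspring c \<omega> v))" if "A \<in> ?C" for A
      using that by (auto simp: depends_on_def offspring_def intro!: prod.cong)
  qed (use Suc.prems in \<open>auto simp: nn_integral_prod_offspring_power[OF c] intro!: nn_integral_cong\<close>)
  also have "\<dots> = (\<integral>\<^sup>+\<omega>. ennreal (poisson_pgf \<delta> t ^ card (?S \<omega>)) \<partial>net)"
    by (subst condition) (auto simp: depends_on_def)
  also have "\<dots> = ennreal ((poisson_pgf \<delta> ^^ k) (poisson_pgf \<delta> t))"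
    using Suc.IH[of "poisson_pgf \<delta> t"] Suc.prems \<delta>_pos
    by (simp add: less_imp_le poisson_pgf_mono[where v = 1, simplified])
  also have "\<dots> = ennreal ((poisson_pgf \<delta> ^^ Suc k) t)"
    by (simp only: funpow_Suc_right comp_def)
  finally show ?case .
qed simp

lemma prob_extinct:
  assumes "poisson_family c"
  shows "measure net {\<omega>. card (generation (offspring c \<omega>) k) = 0} = (poisson_pgf \<delta> ^^ k) 0"
proof -
  have extinct: "{\<omega>. card (generation (offspring c \<omega>) k) = 0} \<in> sets net"
    by (intro sets_net_Collect) measurable
  have "emeasure net {\<omega>. card (generation (offspring c \<omega>) k) = 0}
      = (\<integral>\<^sup>+\<omega>. ennreal (0 ^ card (generation (offspring c \<omega>) k)) \<partial>net)"
    by (subst nn_integral_indicator[symmetric, OF extinct]) (auto intro!: nn_integral_cong split: split_indicator)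
  also have "\<dots> = ennreal ((poisson_pgf \<delta> ^^ k) 0)"
    by (rule nn_integral_power_card_generation[OF assms]) auto
  finally show ?thesis
    by (simp add: emeasure_net_eq_measure funpow_poisson_pgf_nonneg)
qed

lemma prob_survive:
  assumes "poisson_family c"
  shows "measure net {\<omega>. card (generation (offspring c \<omega>) k) \<noteq> 0} = 1 - (poisson_pgf \<delta> ^^ k) 0"
proof -
  have "{\<omega>. card (generation (offspring c \<omega>) k) = 0} \<in> sets net"
    by (intro sets_net_Collect) measurable
  moreover have "{\<omega>. card (generation (offspring c \<omega>) k) \<noteq> 0}
      = space net - {\<omega>. card (generation (offspring c \<omega>) k) = 0}"
    by auto
  ultimately show ?thesis
    using P.prob_compl prob_extinct[OF assms] by metis
qed

text \<open>Since \<open>t^Z \<ge> exp (-1)\<close> on \<open>{1 \<le> Z \<le> x}\<close> for \<open>t = exp (-1/x)\<close>, a Chernoff-type bound on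
  the generating function controls small but nonzero generation sizes.\<close>

lemma prob_small_generation:
  assumes "poisson_family c" and "0 < x"
  shows "measure net {\<omega>. 1 \<le> card (generation (offspring c \<omega>) k) \<and> real (card (generation (offspring c \<omega>) k)) \<le> x}
     \<le> exp 1 * ((poisson_pgf \<delta> ^^ k) (exp (-1/x)) - (poisson_pgf \<delta> ^^ k) 0)"
proof -
  let ?Z = "\<lambda>\<omega>. card (generation (offspring c \<omega>) k)" and ?t = "exp (-1/x)"
  let ?A = "{\<omega>. ?Z \<omega> = 0}" and ?B = "{\<omega>. 1 \<le> ?Z \<omega> \<and> real (?Z \<omega>) \<le> x}"
  have A: "?A \<in> sets net" and B: "?B \<in> sets net"
    by (intro sets_net_Collect; measurable)+
  have pointwise: "indicator ?A \<omega> + ennreal (exp (-1)) * indicator ?B \<omega> \<le> ennreal (?t ^ ?Z \<omega>)" for \<omega>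
  proof (cases "?Z \<omega> \<noteq> 0 \<and> real (?Z \<omega>) \<le> x")
    case True
    then have "exp (-1) \<le> exp (- real (?Z \<omega>) / x)"
      using \<open>0 < x\<close> by (simp add: field_simps)
    also have "\<dots> = ?t ^ ?Z \<omega>"
      by (simp flip: exp_of_nat_mult)
    finally show ?thesis
      using True by (simp add: indicator_def ennreal_leI)
  qed (auto simp: indicator_def)
  have "ennreal (measure net ?A + exp (-1) * measure net ?B)
      = (\<integral>\<^sup>+\<omega>. indicator ?A \<omega> \<partial>net) + ennreal (exp (-1)) * (\<integral>\<^sup>+\<omega>. indicator ?B \<omega> \<partial>net)"
    by (simp only: nn_integral_indicator[OF A] nn_integral_indicator[OF B] emeasure_net_eq_measure)
      (simp add: ennreal_mult)
  also have "\<dots> = (\<integral>\<^sup>+\<omega>. indicator ?A \<omega> + ennreal (exp (-1)) * indicator ?B \<omega> \<partial>net)"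
    using A B by (simp add: nn_integral_add nn_integral_cmult)
  also have "\<dots> \<le> (\<integral>\<^sup>+\<omega>. ennreal (?t ^ ?Z \<omega>) \<partial>net)"
    by (intro nn_integral_mono pointwise)
  also have "\<dots> = ennreal ((poisson_pgf \<delta> ^^ k) ?t)"
    using assms by (intro nn_integral_power_card_generation) auto
  finally have "measure net ?A + exp (-1) * measure net ?B \<le> (poisson_pgf \<delta> ^^ k) ?t"
    by (simp only: ennreal_le_iff[OF funpow_poisson_pgf_nonneg[OF exp_ge_zero]])
  then have "exp (-1) * measure net ?B \<le> (poisson_pgf \<delta> ^^ k) ?t - (poisson_pgf \<delta> ^^ k) 0"
    using prob_extinct[OF assms(1)] by simp
  then show ?thesis
    by (simp add: exp_minus field_simps)
qed

lemma prob_both_survive: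
  "measure net {\<omega>. card (generation (offspring Off1 \<omega>) k) \<noteq> 0 \<and> card (generation (offspring Off2 \<omega>) k) \<noteq> 0}
    = (1 - (poisson_pgf \<delta> ^^ k) 0)\<^sup>2"
proof -
  let ?A = "\<lambda>c. {\<omega>. card (generation (offspring c \<omega>) k) \<noteq> 0}"
  have A_sets: "?A c \<in> sets net" for c
    by (intro sets_net_Collect) measurable
  have depends: "depends_on (range c) (indicator (?A c) :: _ \<Rightarrow> ennreal)" for c
  proof -
    have "depends_on (range c) (\<lambda>\<omega>. generation (offspring c \<omega>) k)"
      by (rule depends_on_mono[OF generation_depends_on]) auto
    then have "depends_on (range c) (\<lambda>\<omega>. indicator {G. card G \<noteq> 0} (generation (offspring c \<omega>) k) :: ennreal)"
      by (rule depends_on_comp)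
    moreover have "indicator (?A c) = (\<lambda>\<omega>. indicator {G. card G \<noteq> 0} (generation (offspring c \<omega>) k) :: ennreal)"
      by (auto simp: indicator_def fun_eq_iff)
    ultimately show ?thesis
      by simp
  qed
  have "emeasure net (?A Off1 \<inter> ?A Off2) = (\<integral>\<^sup>+\<omega>. indicator (?A Off1) \<omega> * indicator (?A Off2) \<omega> \<partial>net)"
    using A_sets by (simp add: indicator_inter_arith[symmetric])
  also have "\<dots> = emeasure net (?A Off1) * emeasure net (?A Off2)"
    by (subst nn_integral_mult_indep_blocks[OF _ _ _ depends depends]) (use A_sets in auto)
  finally have "measure net (?A Off1 \<inter> ?A Off2) = measure net (?A Off1) * measure net (?A Off2)"
    by (simp add: emeasure_net_eq_measure ennreal_mult[symmetric])
  moreover have "?A Off1 \<inter> ?A Off2 = {\<omega>. card (generation (offspring Off1 \<omega>) k) \<noteq> 0 \<and> card (generation (offspring Off2 \<omega>) k) \<noteq> 0}"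
    by auto
  ultimately show ?thesis
    using prob_survive[OF poisson_family_Off1, of k] prob_survive[OF poisson_family_Off2, of k]
    by (simp add: power2_eq_square)
qed

lemma nn_integral_no_cross_edge:
  assumes "finite A" and "finite B"
  shows "(\<integral>\<^sup>+\<omega>. (\<Prod>i\<in>(\<lambda>(a, b). CrossB a b) ` (A \<times> B). of_bool (\<omega> i \<noteq> 1) :: ennreal) \<partial>net)
    = ennreal ((1 - p) ^ (card A * card B))"
proof -
  have inj: "inj_on (\<lambda>(a, b). CrossB a b) X" for X
    by (auto simp: inj_on_def)
  have "(\<integral>\<^sup>+\<omega>. (\<Prod>i\<in>(\<lambda>(a, b). CrossB a b) ` (A \<times> B). of_bool (\<omega> i \<noteq> 1) :: ennreal) \<partial>net)
      = (\<Prod>i\<in>(\<lambda>(a, b). CrossB a b) ` (A \<times> B). \<integral>\<^sup>+y. of_bool (y \<noteq> 1) \<partial>M i)"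
    using assms by (intro nn_integral_prod_coordinates[where \<phi> = "\<lambda>i y. of_bool (y \<noteq> 1)"]) auto
  also have "\<dots> = (\<Prod>i\<in>(\<lambda>(a, b). CrossB a b) ` (A \<times> B). ennreal (1 - p))"
    using p_nonneg p_le_one by (intro prod.cong refl) (auto simp: coord_dist_def)
  also have "\<dots> = ennreal ((1 - p) ^ (card A * card B))"
    using p_le_one by (simp add: card_image[OF inj] card_cartesian_product ennreal_power)
  finally show ?thesis .
qed

lemma no_cross_edge_measurable [measurable]:
  "Measurable.pred net (\<lambda>\<omega>. \<forall>a\<in>generation (offspring Off1 \<omega>) k. \<forall>b\<in>generation (offspring Off2 \<omega>) k.
    \<omega> (CrossB a b) \<noteq> 1)"
proof -
  have "(\<lambda>\<omega>. \<forall>a\<in>generation (offspring Off1 \<omega>) k. \<forall>b\<in>generation (offspring Off2 \<omega>) k. \<omega> (CrossB a b) \<noteq> 1)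
      = (\<lambda>\<omega>. \<forall>a b. in_tree (offspring Off1 \<omega>) a \<and> length a = k \<and> in_tree (offspring Off2 \<omega>) b
          \<and> length b = k \<longrightarrow> \<omega> (CrossB a b) \<noteq> 1)"
    by (auto simp: generation_def fun_eq_iff)
  then show ?thesis
    by simp
qed

text \<open>Conditioning on the two \<open>k\<close>-th generations, the cross edges between them are
  independent of the trees, and each of them is absent with probability \<open>1 - p\<close>.\<close>

lemma prob_no_cross_edge:
  assumes "0 \<le> x"
  shows "measure net {\<omega>. x < real (card (generation (offspring Off1 \<omega>) k))
      \<and> x < real (card (generation (offspring Off2 \<omega>) k))
      \<and> (\<forall>a\<in>generation (offspring Off1 \<omega>) k. \<forall>b\<in>generation (offspring Off2 \<omega>) k. \<omega> (CrossB a b) \<noteq> 1)}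
    \<le> exp (- p * x\<^sup>2)"
    (is "measure net ?E \<le> _")
proof -
  let ?C = "{A :: nat list set. finite A \<and> A \<subseteq> {v. length v = k}}"
  let ?S = "\<lambda>\<omega>. (generation (offspring Off1 \<omega>) k, generation (offspring Off2 \<omega>) k)"
  define h where "h G \<omega> = of_bool (x < real (card (fst G)) \<and> x < real (card (snd G)))
      * (\<Prod>i\<in>(\<lambda>(a, b). CrossB a b) ` (fst G \<times> snd G). of_bool (\<omega> i \<noteq> 1) :: ennreal)"
    for G :: "nat list set \<times> nat list set" and \<omega> :: "idx \<Rightarrow> real"
  have S_in: "?S \<omega> \<in> ?C \<times> ?C" for \<omega>
    using generation_in_finite_sets_of_length by blast
  have S_measurable: "Measurable.pred net (\<lambda>\<omega>. ?S \<omega> = G)" for G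
    by (cases G) simp
  have h_measurable: "h G \<in> borel_measurable net" for G
    unfolding h_def by measurable
  have S_depends: "depends_on (range Off1 \<union> range Off2) ?S"
    using generation_depends_on[of Off1 k] generation_depends_on[of Off2 k] unfolding depends_on_def by auto
  have h_depends: "depends_on (range (\<lambda>(a, b). CrossB a b)) (h G)" for G
    unfolding depends_on_def h_def by (auto intro!: prod.cong arg_cong2[where f = "(*)"])
  have "?E \<in> sets net"
    by (intro sets_net_Collect) measurable
  then have "emeasure net ?E = (\<integral>\<^sup>+\<omega>. h (?S \<omega>) \<omega> \<partial>net)"
    by (simp add: h_def indicator_def prod_of_bool of_bool_conj mult.assoc flip: nn_integral_indicator)
  also have "\<dots> = (\<integral>\<^sup>+G. emeasure net {\<omega>. ?S \<omega> = G} * (\<integral>\<^sup>+\<omega>. h G \<omega> \<partial>net) \<partial>count_space (?C \<times> ?C))"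
    by (rule nn_integral_condition_on[OF _ S_in S_measurable h_measurable S_depends h_depends])
      (auto simp: h_def intro!: countable_finite_sets_of_length)
  also have "\<dots> \<le> (\<integral>\<^sup>+G. emeasure net {\<omega>. ?S \<omega> = G} * ennreal (exp (- p * x\<^sup>2)) \<partial>count_space (?C \<times> ?C))"
  proof (intro nn_integral_mono mult_left_mono)
    fix G assume "G \<in> space (count_space (?C \<times> ?C))"
    then obtain A B where G: "G = (A, B)" "finite A" "finite B"
      by auto
    have "(\<integral>\<^sup>+\<omega>. h G \<omega> \<partial>net) = of_bool (x < real (card A) \<and> x < real (card B))
        * ennreal ((1 - p) ^ (card A * card B))"
      using G by (simp add: h_def nn_integral_cmult nn_integral_no_cross_edge)
    also have "\<dots> \<le> ennreal (exp (- p * x\<^sup>2))"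
      using assms p_nonneg p_le_one one_minus_power_le_exp[of p x "card A" "card B"]
      by (auto intro!: ennreal_leI)
    finally show "(\<integral>\<^sup>+\<omega>. h G \<omega> \<partial>net) \<le> ennreal (exp (- p * x\<^sup>2))" .
  qed simp
  also have "\<dots> = ennreal (exp (- p * x\<^sup>2))"
    using nn_integral_emeasure_fibres[OF _ S_in S_measurable] countable_finite_sets_of_length
    by (simp add: nn_integral_multc)
  finally show ?thesis
    by (simp add: emeasure_net_eq_measure)
qed

lemma open_in_sets_net: "open S \<Longrightarrow> S \<in> sets net"
proof -
  assume "open S"
  then have "S \<in> sets (PiM UNIV (\<lambda>i::idx. borel :: real measure))"
    by (simp add: sets_PiM_equal_borel)
  moreover have "(\<lambda>x. x) \<in> net \<rightarrow>\<^sub>M PiM UNIV (\<lambda>i::idx. borel :: real measure)"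
    by (rule measurable_PiM_single') (auto simp: space_PiM id_measurable_M)
  ultimately show ?thesis
    using measurable_sets[of "\<lambda>x. x" net _ S] by simp
qed

lemma rho_le_measurable [measurable]: "Measurable.pred net (\<lambda>\<omega>. rho \<omega> k \<le> ereal c)"
proof -
  let ?\<Sigma> = "{T :: nat list set. finite T} \<times> {T :: nat list set. finite T} \<times> {D :: (nat list \<times> nat list) set. finite D}"
  let ?state = "\<lambda>\<omega>. (trunc1 \<omega> k, trunc2 \<omega> k, cross_set \<omega> k)"
  let ?Q = "\<lambda>(T1, T2, D) \<omega>. \<forall>m::nat. \<exists>\<theta>.
    unit_flow (Inl ` T1 \<union> Inr ` T2) (tree_edges k T1 T2) N_ends (res_pattern D) (Inl []) (Inr []) \<theta>
    \<and> pattern_energy (tree_edges k T1 T2) D \<theta> \<omega> < c + 1 / Suc m"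
  have "finite (cross_set \<omega> k)" for \<omega>
    by (rule finite_subset[of _ "gen1 \<omega> k \<times> gen2 \<omega> k"]) (auto simp: cross_set_def)
  then have "(\<lambda>\<omega>. rho \<omega> k \<le> ereal c) = (\<lambda>\<omega>. \<exists>\<sigma>\<in>?\<Sigma>. ?state \<omega> = \<sigma> \<and> ?Q \<sigma> \<omega>)"
    by (auto simp: fun_eq_iff rho_le_iff)
  moreover have "Measurable.pred net (\<lambda>\<omega>. ?state \<omega> = \<sigma>)" for \<sigma>
  proof -
    obtain T1 T2 D where \<sigma>: "\<sigma> = (T1, T2, D)"
      by (cases \<sigma>) auto
    have "(\<lambda>\<omega>. ?state \<omega> = \<sigma>) = (\<lambda>\<omega>. (\<forall>v. v \<in> T1 \<longleftrightarrow> in_tree (offspring Off1 \<omega>) v \<and> length v \<le> k)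
       \<and> (\<forall>v. v \<in> T2 \<longleftrightarrow> in_tree (offspring Off2 \<omega>) v \<and> length v \<le> k)
       \<and> (\<forall>a b. (a, b) \<in> D \<longleftrightarrow> in_tree (offspring Off1 \<omega>) a \<and> length a = k
           \<and> in_tree (offspring Off2 \<omega>) b \<and> length b = k \<and> \<omega> (CrossB a b) = 1))"
      unfolding \<sigma>
      by (auto simp: fun_eq_iff trunc1_def trunc2_def cross_set_def gen1_def gen2_def
          off1_eq_offspring off2_eq_offspring)
    then show ?thesis
      by simp
  qed
  moreover have "Measurable.pred net (?Q \<sigma>)" for \<sigma>
  proof -
    obtain T1 T2 D where \<sigma>: "\<sigma> = (T1, T2, D)"
      by (cases \<sigma>) auto
    have "Measurable.pred net (\<lambda>\<omega>. \<exists>\<theta>.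
        unit_flow (Inl ` T1 \<union> Inr ` T2) (tree_edges k T1 T2) N_ends (res_pattern D) (Inl []) (Inr []) \<theta>
        \<and> pattern_energy (tree_edges k T1 T2) D \<theta> \<omega> < c + 1 / Suc m)" for m
      unfolding pred_def using open_in_sets_net[OF open_pattern_energy_less] by simp
    then show ?thesis
      unfolding \<sigma> prod.case by measurable
  qed
  ultimately show ?thesis
    by (simp only:) (intro measurable_pred_countable(2), auto intro: countable_Collect_finite)
qed

lemma roots_connected_measurable [measurable]: "Measurable.pred net (\<lambda>\<omega>. roots_connected \<omega> k)"
proof -
  have "(\<lambda>\<omega>. roots_connected \<omega> k) = (\<lambda>\<omega>. \<exists>a b. (in_tree (offspring Off1 \<omega>) a \<and> length a = k)
      \<and> (in_tree (offspring Off2 \<omega>) b \<and> length b = k) \<and> \<omega> (CrossB a b) = 1)"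
    by (auto simp: fun_eq_iff roots_connected_iff_cross_edge gen1_def gen2_def off1_eq_offspring off2_eq_offspring)
  then show ?thesis
    by simp
qed

lemma both_trees_survive_measurable [measurable]:
  "Measurable.pred net (\<lambda>\<omega>. gen1 \<omega> k \<noteq> {} \<and> gen2 \<omega> k \<noteq> {})"
  by (simp add: gen1_eq_generation gen2_eq_generation)

lemma prob_both_trees_survive:
  assumes "1 < \<delta>"
  shows "(1 - 1/\<delta>)\<^sup>2 \<le> measure net {\<omega>. gen1 \<omega> k \<noteq> {} \<and> gen2 \<omega> k \<noteq> {}}"
proof -
  have "measure net {\<omega>. gen1 \<omega> k \<noteq> {} \<and> gen2 \<omega> k \<noteq> {}} = (1 - (poisson_pgf \<delta> ^^ k) 0)\<^sup>2"
    using prob_both_survive[of k] by (simp add: gen1_eq_generation gen2_eq_generation)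
  moreover have "(poisson_pgf \<delta> ^^ k) 0 \<le> 1/\<delta>"
    using funpow_poisson_pgf_le_inverse[OF assms, of 0 k] assms by simp
  ultimately show ?thesis
    using assms by (simp add: power_mono)
qed

text \<open>If both trees survive but the roots are not connected, then one of the two \<open>k\<close>-th
  generations has at most \<open>x\<close> members, or both have more than \<open>x\<close> and no cross edge is present.\<close>

lemma prob_disconnected_le:
  assumes "0 < x"
  shows "measure net {\<omega>. \<not> roots_connected \<omega> k \<and> gen1 \<omega> k \<noteq> {} \<and> gen2 \<omega> k \<noteq> {}}
    \<le> 2 * exp 1 * ((poisson_pgf \<delta> ^^ k) (exp (-1/x)) - (poisson_pgf \<delta> ^^ k) 0) + exp (- p * x\<^sup>2)"
proof -
  let ?Z = "\<lambda>c \<omega>. card (generation (offspring c \<omega>) k)"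
  let ?small = "\<lambda>c. {\<omega>. 1 \<le> ?Z c \<omega> \<and> real (?Z c \<omega>) \<le> x}"
  let ?none = "{\<omega>. x < real (?Z Off1 \<omega>) \<and> x < real (?Z Off2 \<omega>)
      \<and> (\<forall>a\<in>generation (offspring Off1 \<omega>) k. \<forall>b\<in>generation (offspring Off2 \<omega>) k. \<omega> (CrossB a b) \<noteq> 1)}"
  have small_sets: "?small c \<in> sets net" for c
    by (intro sets_net_Collect) measurable
  have none_set: "?none \<in> sets net"
    by (intro sets_net_Collect) measurable
  have "{\<omega>. \<not> roots_connected \<omega> k \<and> gen1 \<omega> k \<noteq> {} \<and> gen2 \<omega> k \<noteq> {}} \<subseteq> ?small Off1 \<union> ?small Off2 \<union> ?none"
  proof
    fix \<omega>
    assume "\<omega> \<in> {\<omega>. \<not> roots_connected \<omega> k \<and> gen1 \<omega> k \<noteq> {} \<and> gen2 \<omega> k \<noteq> {}}"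
    then have "\<forall>a\<in>generation (offspring Off1 \<omega>) k. \<forall>b\<in>generation (offspring Off2 \<omega>) k. \<omega> (CrossB a b) \<noteq> 1"
      and "1 \<le> ?Z Off1 \<omega>" and "1 \<le> ?Z Off2 \<omega>"
      by (auto simp: roots_connected_iff_cross_edge gen1_eq_generation gen2_eq_generation Suc_le_eq)
    then show "\<omega> \<in> ?small Off1 \<union> ?small Off2 \<union> ?none"
      by (auto simp: not_le)
  qed
  then have "measure net {\<omega>. \<not> roots_connected \<omega> k \<and> gen1 \<omega> k \<noteq> {} \<and> gen2 \<omega> k \<noteq> {}}
      \<le> measure net (?small Off1 \<union> ?small Off2 \<union> ?none)"
    using small_sets none_set by (intro P.finite_measure_mono) auto
  also have "\<dots> \<le> measure net (?small Off1) + measure net (?small Off2) + measure net ?none"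
    using small_sets none_set measure_Un_le[of "?small Off1" net "?small Off2"]
      measure_Un_le[of "?small Off1 \<union> ?small Off2" net ?none]
    by simp
  also have "\<dots> \<le> 2 * exp 1 * ((poisson_pgf \<delta> ^^ k) (exp (-1/x)) - (poisson_pgf \<delta> ^^ k) 0) + exp (- p * x\<^sup>2)"
    using prob_small_generation[OF poisson_family_Off1 assms, of k] prob_small_generation[OF poisson_family_Off2 assms, of k]
      prob_no_cross_edge[of x k] assms
    by simp
  finally show ?thesis .
qed

lemma cond_pr_roots_connected_ge:
  assumes "1 < \<delta>" and "0 < x"
  shows "1 - (2 * exp 1 * ((poisson_pgf \<delta> ^^ k) (exp (-1/x)) - (poisson_pgf \<delta> ^^ k) 0) + exp (- p * x\<^sup>2))
      / (1 - 1/\<delta>)\<^sup>2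
    \<le> cond_pr net (\<lambda>\<omega>. roots_connected \<omega> k) (\<lambda>\<omega>. gen1 \<omega> k \<noteq> {} \<and> gen2 \<omega> k \<noteq> {})"
proof -
  let ?B = "{\<omega>. gen1 \<omega> k \<noteq> {} \<and> gen2 \<omega> k \<noteq> {}}"
  let ?bad = "{\<omega>. \<not> roots_connected \<omega> k \<and> gen1 \<omega> k \<noteq> {} \<and> gen2 \<omega> k \<noteq> {}}"
  have q: "0 < (1 - 1/\<delta>)\<^sup>2" and B: "(1 - 1/\<delta>)\<^sup>2 \<le> measure net ?B"
    using assms prob_both_trees_survive[OF assms(1), of k] by auto
  have "?B \<in> sets net" and "?bad \<in> sets net"
    by (intro sets_net_Collect; measurable)+
  then have "measure net (?B - ?bad) = measure net ?B - measure net ?bad"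
    by (intro P.finite_measure_Diff) auto
  moreover have "{\<omega>. roots_connected \<omega> k \<and> gen1 \<omega> k \<noteq> {} \<and> gen2 \<omega> k \<noteq> {}} = ?B - ?bad"
    by auto
  ultimately have "cond_pr net (\<lambda>\<omega>. roots_connected \<omega> k) (\<lambda>\<omega>. gen1 \<omega> k \<noteq> {} \<and> gen2 \<omega> k \<noteq> {})
      = 1 - measure net ?bad / measure net ?B"
    using q B by (simp add: cond_pr_def diff_divide_distrib less_le_trans[OF q B, THEN less_imp_neq, symmetric])
  moreover have "measure net ?bad / measure net ?B
      \<le> (2 * exp 1 * ((poisson_pgf \<delta> ^^ k) (exp (-1/x)) - (poisson_pgf \<delta> ^^ k) 0) + exp (- p * x\<^sup>2))
        / (1 - 1/\<delta>)\<^sup>2"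
    using prob_disconnected_le[OF assms(2), of k] measure_nonneg[of net ?bad] q B
    by (intro frac_le) linarith+
  ultimately show ?thesis
    by simp
qed

text \<open>Almost surely every resistance is at most \<open>K\<close>; then a single present cross edge already
  gives a path of \<open>2k + 1\<close> edges, of resistance at most \<open>(2k + 1) K\<close>.\<close>

lemma cond_pr_rho_le_eq_roots_connected:
  assumes "measure \<mu> {..K} = 1" and [measurable]: "Measurable.pred net B"
  shows "cond_pr net (\<lambda>\<omega>. rho \<omega> k \<le> ereal ((2 * real k + 1) * K)) B = cond_pr net (\<lambda>\<omega>. roots_connected \<omega> k) B"
proof -
  have "AE \<omega> in net. \<omega> i \<le> K" if "M i = \<mu>" for i
  proof -
    have "AE x in M i. x \<le> K"
      unfolding that using prob_space.AE_prob_1[OF prob_space_\<mu> assms(1)] by simp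
    then show ?thesis
      using AE_component[of i "\<lambda>x. x \<le> K"] by simp
  qed
  then have "AE \<omega> in net. (\<forall>v. \<omega> (Res1 v) \<le> K) \<and> (\<forall>v. \<omega> (Res2 v) \<le> K) \<and> (\<forall>a b. \<omega> (CrossR a b) \<le> K)"
    by (simp add: AE_all_countable coord_dist_def)
  then have "AE \<omega> in net. rho \<omega> k \<le> ereal ((2 * real k + 1) * K) \<longleftrightarrow> roots_connected \<omega> k"
  proof eventually_elim
    case (elim \<omega>)
    show ?case
    proof
      assume "rho \<omega> k \<le> ereal ((2 * real k + 1) * K)"
      then show "roots_connected \<omega> k"
        by (rule rho_le_imp_roots_connected)
    next
      assume "roots_connected \<omega> k"
      then obtain a b where "a \<in> gen1 \<omega> k" "b \<in> gen2 \<omega> k" "\<omega> (CrossB a b) = 1"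
        by (auto simp: roots_connected_iff_cross_edge)
      with elim show "rho \<omega> k \<le> ereal ((2 * real k + 1) * K)"
        by (intro rho_le_of_cross_edge) auto
    qed
  qed
  moreover have "{\<omega>. rho \<omega> k \<le> ereal ((2 * real k + 1) * K) \<and> B \<omega>} \<in> sets net"
    and "{\<omega>. roots_connected \<omega> k \<and> B \<omega>} \<in> sets net"
    by (intro sets_net_Collect; measurable)+
  ultimately have "measure net {\<omega>. rho \<omega> k \<le> ereal ((2 * real k + 1) * K) \<and> B \<omega>}
      = measure net {\<omega>. roots_connected \<omega> k \<and> B \<omega>}"
    by (intro measure_eq_AE) auto
  then show ?thesis
    by (simp add: cond_pr_def)
qed

lemma cond_pr_roots_connected_ge_threshold:
  fixes n :: nat
  assumes "1 < \<delta>" and "0 < a" and "0 \<le> C"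
    and gap: "\<And>x. 1 \<le> x \<Longrightarrow> (poisson_pgf \<delta> ^^ k) (exp (-1/x)) - (poisson_pgf \<delta> ^^ k) 0 \<le> C * (x / \<delta> ^ k) powr a"
    and "1 \<le> n" and "0 \<le> \<epsilon>" and "1 / real n \<le> p"
    and "(1 + 2 * \<epsilon>) / (2 * ln \<delta>) * ln (real n) \<le> real k"
  shows "1 - (2 * exp 1 * C + 1) / (1 - 1/\<delta>)\<^sup>2 * real n powr (- min (a / 2) 1 * \<epsilon>)
    \<le> cond_pr net (\<lambda>\<omega>. roots_connected \<omega> k) (\<lambda>\<omega>. gen1 \<omega> k \<noteq> {} \<and> gen2 \<omega> k \<noteq> {})"
proof -
  define x where "x = real n powr ((1 + \<epsilon>) / 2)"
  let ?r = "real n powr (- min (a / 2) 1 * \<epsilon>)"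
  have "1 \<le> x"
    using assms by (simp add: x_def ge_one_powr_ge_zero)
  have "(x / \<delta> ^ k) powr a \<le> (real n powr (- \<epsilon> / 2)) powr a"
    using powr_div_power_le_at_threshold[OF assms(5,1,8)] assms by (intro powr_mono2) (auto simp: x_def)
  also have "\<dots> = real n powr (- (a / 2) * \<epsilon>)"
    by (simp add: powr_powr algebra_simps)
  also have "\<dots> \<le> ?r"
  proof (intro powr_mono)
    show "- (a / 2) * \<epsilon> \<le> - min (a / 2) 1 * \<epsilon>"
      using \<open>0 \<le> \<epsilon>\<close> mult_right_mono[of "min (a / 2) 1" "a / 2" \<epsilon>] by simp
  qed (use assms in simp)
  finally have "(poisson_pgf \<delta> ^^ k) (exp (-1/x)) - (poisson_pgf \<delta> ^^ k) 0 \<le> C * ?r"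
    using gap[OF \<open>1 \<le> x\<close>] \<open>0 \<le> C\<close> by (meson mult_left_mono order_trans)
  then have "2 * exp 1 * ((poisson_pgf \<delta> ^^ k) (exp (-1/x)) - (poisson_pgf \<delta> ^^ k) 0) \<le> 2 * exp 1 * (C * ?r)"
    by (intro mult_left_mono) auto
  moreover have "exp (- p * x\<^sup>2) \<le> ?r"
  proof -
    have "real n powr (- \<epsilon>) \<le> ?r"
      using assms mult_right_mono[of "min (a / 2) 1" 1 \<epsilon>] by (intro powr_mono) auto
    with exp_le_at_threshold[OF assms(5-7)] show ?thesis
      by (simp add: x_def)
  qed
  ultimately have "2 * exp 1 * ((poisson_pgf \<delta> ^^ k) (exp (-1/x)) - (poisson_pgf \<delta> ^^ k) 0) + exp (- p * x\<^sup>2)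
      \<le> (2 * exp 1 * C + 1) * ?r"
    unfolding distrib_right mult.assoc mult_1_left by linarith
  then have "(2 * exp 1 * ((poisson_pgf \<delta> ^^ k) (exp (-1/x)) - (poisson_pgf \<delta> ^^ k) 0) + exp (- p * x\<^sup>2))
      / (1 - 1/\<delta>)\<^sup>2 \<le> (2 * exp 1 * C + 1) * ?r / (1 - 1/\<delta>)\<^sup>2"
    by (rule divide_right_mono) simp
  with cond_pr_roots_connected_ge[OF assms(1), of x k] \<open>1 \<le> x\<close> show ?thesis
    by simp
qed

end

lemma cond_pr_netP_bounds:
  fixes \<gamma> :: "nat \<Rightarrow> real" and n k :: nat
  assumes "prob_space \<mu>" and "sets \<mu> = sets borel" and "measure \<mu> {..K} = 1" and "1 < \<delta>"
    and "0 < a" and "0 \<le> C"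
    and gap: "\<And>x. 1 \<le> x \<Longrightarrow> (poisson_pgf \<delta> ^^ k) (exp (-1/x)) - (poisson_pgf \<delta> ^^ k) 0 \<le> C * (x / \<delta> ^ k) powr a"
    and "\<gamma> n \<le> real n" and "1 < \<gamma> n" and "0 \<le> \<epsilon>"
    and "(1 + 2 * \<epsilon>) / (2 * ln \<delta>) * ln (real n) \<le> real k"
  shows "cond_pr (netP \<mu> \<delta> \<gamma> n) (\<lambda>\<omega>. rho \<omega> k \<le> ereal ((2 * real k + 1) * K))
        (\<lambda>\<omega>. gen1 \<omega> k \<noteq> {} \<and> gen2 \<omega> k \<noteq> {})
      = cond_pr (netP \<mu> \<delta> \<gamma> n) (\<lambda>\<omega>. roots_connected \<omega> k) (\<lambda>\<omega>. gen1 \<omega> k \<noteq> {} \<and> gen2 \<omega> k \<noteq> {})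
    \<and> 1 - (2 * exp 1 * C + 1) / (1 - 1/\<delta>)\<^sup>2 * real n powr (- min (a / 2) 1 * \<epsilon>)
      \<le> cond_pr (netP \<mu> \<delta> \<gamma> n) (\<lambda>\<omega>. roots_connected \<omega> k) (\<lambda>\<omega>. gen1 \<omega> k \<noteq> {} \<and> gen2 \<omega> k \<noteq> {})"
proof -
  have "1 \<le> n"
    using assms(8,9) by simp
  moreover have "0 \<le> \<gamma> n / real n" and "\<gamma> n / real n \<le> 1" and "1 / real n \<le> \<gamma> n / real n"
    using assms(8,9) by (auto simp: divide_le_eq_1 intro: divide_right_mono)
  ultimately show ?thesis
    using random_network.cond_pr_rho_le_eq_roots_connected
        random_network.both_trees_survive_measurable
        random_network.cond_pr_roots_connected_ge_threshold[OF _ \<open>1 < \<delta>\<close> \<open>0 < a\<close> \<open>0 \<le> C\<close> gap] assms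
    by (simp add: netP_def random_network_def)
qed

theorem lemma11:
  fixes \<mu> :: "real measure" and \<delta> \<gamma>\<^sub>0 K :: real and \<gamma> :: "nat \<Rightarrow> real"
  assumes F_prob: "prob_space \<mu>" and F_sets: "sets \<mu> = sets borel"
    and F_nonneg: "measure \<mu> {0..} = 1"
    and \<gamma>_range: "\<And>n. 0 \<le> \<gamma> n \<and> \<gamma> n \<le> real n"
    and \<gamma>_lim: "\<gamma> \<longlonglongrightarrow> \<gamma>\<^sub>0" and \<gamma>_gt: "\<gamma>\<^sub>0 > 1"
    and \<delta>_gt: "\<delta> > 1"
    and F_K: "measure \<mu> {..K} = 1"
  shows "\<exists>C3 C4. 0 < C3 \<and> 0 < C4 \<and>
    (\<forall>\<epsilon>::real. 0 \<le> \<epsilon> \<and> \<epsilon> < 1/3 \<longrightarrow>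
      (\<exists>N. \<forall>n\<ge>N. \<forall>k::nat. real k \<ge> (1 + 2*\<epsilon>) / (2 * ln \<delta>) * ln (real n) \<longrightarrow>
         cond_pr (netP \<mu> \<delta> \<gamma> n) (\<lambda>\<omega>. rho \<omega> k \<le> ereal ((2 * real k + 1) * K))
                 (\<lambda>\<omega>. gen1 \<omega> k \<noteq> {} \<and> gen2 \<omega> k \<noteq> {})
         = cond_pr (netP \<mu> \<delta> \<gamma> n) (\<lambda>\<omega>. roots_connected \<omega> k)
                 (\<lambda>\<omega>. gen1 \<omega> k \<noteq> {} \<and> gen2 \<omega> k \<noteq> {})
       \<and> cond_pr (netP \<mu> \<delta> \<gamma> n) (\<lambda>\<omega>. roots_connected \<omega> k)
                 (\<lambda>\<omega>. gen1 \<omega> k \<noteq> {} \<and> gen2 \<omega> k \<noteq> {})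
         \<ge> 1 - C3 * real n powr (- C4 * \<epsilon>)))"
proof -
  obtain C a where "0 < C" and "0 < a" and gap: "\<And>k x. 1 \<le> x \<Longrightarrow>
      (poisson_pgf \<delta> ^^ k) (exp (-1/x)) - (poisson_pgf \<delta> ^^ k) 0 \<le> C * (x / \<delta> ^ k) powr a"
    using funpow_poisson_pgf_gap_le[OF \<delta>_gt] by blast
  obtain N where N: "\<And>n. N \<le> n \<Longrightarrow> 1 < \<gamma> n"
    using order_tendstoD(1)[OF \<gamma>_lim \<gamma>_gt] by (auto simp: eventually_sequentially)
  \<comment> \<open>The bound holds for every \<open>\<epsilon> \<ge> 0\<close>.\<close>
  show ?thesis
  proof (rule exI[of _ "(2 * exp 1 * C + 1) / (1 - 1/\<delta>)\<^sup>2"], rule exI[of _ "min (a / 2) 1"],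
      intro conjI allI impI exI[of _ N])
    show "0 < (2 * exp 1 * C + 1) / (1 - 1/\<delta>)\<^sup>2"
      using \<open>0 < C\<close> \<delta>_gt by (simp add: add_pos_pos)
    show "0 < min (a / 2) 1"
      using \<open>0 < a\<close> by simp
  qed (use \<gamma>_range N cond_pr_netP_bounds[OF F_prob F_sets F_K \<delta>_gt \<open>0 < a\<close> less_imp_le[OF \<open>0 < C\<close>] gap]
      in blast)+
qed

end
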